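(* The set of all polynomials of several variables with integer coefficients that have a rational solution (i.e. a zero in $\mathbb Q^n$) is recursive if and only if the set of all polynomials of several variables with integer coefficients that have only finitely many rational solutions is recursively enumerable. Equivalently, the first set is not recursive if and only if the second set is not recursively enumerable.
   Context: Polynomials $D\in\mathbb Z[x_1,\ldots,x_n]$ ($n\ge1$ arbitrary) are coded as natural numbers so that recursiveness and recursive enumerability of sets of them make sense; a rational solution of $D$ is a tuple $(x_1,\ldots,x_n)\in\mathbb Q^n$ with $D(x_1,\ldots,x_n)=0$. *)

theory Defs
  imports Complex_Main "HOL-Library.Nat_Bijection"
begin

datatype recf =
    Zero
  | Succ
  | Proj nat
  | Comp recf "recf list"
  | Prim recf recf
  | Mini recf

inductive rec_eval :: "recf \<Rightarrow> nat list \<Rightarrow> nat \<Rightarrow> bool" where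
  ev_zero: "rec_eval Zero xs 0"
| ev_succ: "rec_eval Succ (x # xs) (Suc x)"
| ev_proj: "i < length xs \<Longrightarrow> rec_eval (Proj i) xs (xs ! i)"
| ev_comp: "length ys = length gs \<Longrightarrow> (\<forall>i<length gs. rec_eval (gs ! i) xs (ys ! i))
            \<Longrightarrow> rec_eval f ys z \<Longrightarrow> rec_eval (Comp f gs) xs z"
| ev_prim0: "rec_eval f xs y \<Longrightarrow> rec_eval (Prim f g) (0 # xs) y"
| ev_primS: "rec_eval (Prim f g) (n # xs) y \<Longrightarrow> rec_eval g (n # y # xs) z
            \<Longrightarrow> rec_eval (Prim f g) (Suc n # xs) z"
| ev_mini: "rec_eval f (n # xs) 0 \<Longrightarrow> (\<forall>m<n. \<exists>y. rec_eval f (m # xs) y \<and> y > 0)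
            \<Longrightarrow> rec_eval (Mini f) xs n"

definition recursive_set :: "nat set \<Rightarrow> bool" where
  "recursive_set A \<longleftrightarrow> (\<exists>p. \<forall>k. rec_eval p [k] (if k \<in> A then 1 else 0))"

definition re_set :: "nat set \<Rightarrow> bool" where
  "re_set A \<longleftrightarrow> (\<exists>p. \<forall>k. k \<in> A \<longleftrightarrow> (\<exists>y. rec_eval p [k] y))"

text \<open>A polynomial in x_1..x_n is a list of monomials (c, [e_1,..,e_n]) meaning c * x_1^e_1 * ... * x_n^e_n.\<close>
type_synonym ipoly = "(int \<times> nat list) list"

definition ipoly_eval :: "ipoly \<Rightarrow> rat list \<Rightarrow> rat" where
  "ipoly_eval D xs = (\<Sum>(c, es)\<leftarrow>D. of_int c * (\<Prod>i<length xs. (xs ! i) ^ (es ! i)))"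

definition decode_poly :: "nat \<Rightarrow> nat \<times> ipoly" where
  "decode_poly k = (let (n, m) = prod_decode k in
     (n, map (\<lambda>j. let (a, b) = prod_decode j in (int_decode a, list_decode b)) (list_decode m)))"

definition valid_code :: "nat \<Rightarrow> bool" where
  "valid_code k \<longleftrightarrow> (let (n, D) = decode_poly k in n \<ge> 1 \<and> (\<forall>(c, es)\<in>set D. length es = n))"

definition rat_solutions :: "nat \<Rightarrow> rat list set" where
  "rat_solutions k = (let (n, D) = decode_poly k in {xs. length xs = n \<and> ipoly_eval D xs = 0})"

definition has_rat_solution_set :: "nat set" where
  "has_rat_solution_set = {k. valid_code k \<and> rat_solutions k \<noteq> {}}"

definition fin_rat_solutions_set :: "nat set" where
  "fin_rat_solutions_set = {k. valid_code k \<and> finite (rat_solutions k)}"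

end

theory Submission
  imports Defs
begin

text \<open>Let S be the set of codes of polynomials with a rational zero and F the set of codes
  of polynomials with finitely many. S is recursively enumerable, since whether a tuple of
  rationals is a zero is decidable. Adding a dummy variable turns a polynomial without zeros
  into one without zeros and a polynomial with a zero into one with infinitely many, so the
  complement of S reduces to F. Conversely, D has finitely many zeros iff for some finite list
  of points the polynomial D^2 + (x_0 \<Prod>t. S_t - 1)^2 has no zero, where S_t vanishes exactly at
  the point t. Hence F is r.e.\ if S is recursive, and if F is r.e.\ then so is the complement
  of S, which makes S recursive by Post's theorem.\<close>

section \<open>Computable functions\<close>

definition computable :: "nat \<Rightarrow> (nat list \<Rightarrow> nat) \<Rightarrow> bool" where
  "computable m F \<longleftrightarrow> (\<exists>p. \<forall>xs. length xs = m \<longrightarrow> rec_eval p xs (F xs))"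

named_theorems computable_intros

lemma computable_cong:
  "computable m F \<Longrightarrow> (\<And>xs. length xs = m \<Longrightarrow> F xs = G xs)
    \<Longrightarrow> computable m G"
  unfolding computable_def by metis

lemma computable_zero: "computable m (\<lambda>_. 0)"
  unfolding computable_def by (auto intro: ev_zero)

lemma computable_nth[computable_intros]: "i < m \<Longrightarrow> computable m (\<lambda>xs. xs ! i)"
  unfolding computable_def by (rule exI[of _ "Proj i"]) (auto intro: ev_proj)

lemma computable_Suc_nth0: "computable (Suc 0) (\<lambda>xs. Suc (xs ! 0))"
  unfolding computable_def by (rule exI[of _ Succ]) (auto simp: length_Suc_conv intro: ev_succ)

lemma programs_for_computable_list:
  assumes "\<forall>g\<in>set Gs. computable m g"
  shows "\<exists>ps. length ps = length Gs \<and>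
    (\<forall>i<length Gs. \<forall>xs. length xs = m \<longrightarrow> rec_eval (ps ! i) xs ((Gs ! i) xs))"
  using assms
proof (induction Gs)
  case (Cons g Gs)
  then obtain ps where "length ps = length Gs"
    and "\<forall>i<length Gs. \<forall>xs. length xs = m \<longrightarrow> rec_eval (ps ! i) xs ((Gs ! i) xs)" by auto
  moreover obtain p where "\<forall>xs. length xs = m \<longrightarrow> rec_eval p xs (g xs)"
    using Cons.prems unfolding computable_def by auto
  ultimately show ?case by (intro exI[of _ "p # ps"]) (auto simp: nth_Cons split: nat.split)
qed simp

lemma computable_comp:
  assumes F: "computable (length Gs) F" and Gs: "\<forall>g\<in>set Gs. computable m g"
  shows "computable m (\<lambda>xs. F (map (\<lambda>g. g xs) Gs))"
proof -
  obtain f where f: "\<forall>ys. length ys = length Gs \<longrightarrow> rec_eval f ys (F ys)"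
    using F unfolding computable_def by auto
  obtain ps where "length ps = length Gs"
    and "\<forall>i<length Gs. \<forall>xs. length xs = m \<longrightarrow> rec_eval (ps ! i) xs ((Gs ! i) xs)"
    using programs_for_computable_list[OF Gs] by auto
  then have "rec_eval (Comp f ps) xs (F (map (\<lambda>g. g xs) Gs))" if "length xs = m" for xs
    using f that by (intro ev_comp[where ys="map (\<lambda>g. g xs) Gs"]) auto
  then show ?thesis unfolding computable_def by blast
qed

primrec prim_rec :: "(nat list \<Rightarrow> nat) \<Rightarrow> (nat list \<Rightarrow> nat) \<Rightarrow> nat \<Rightarrow> nat list \<Rightarrow> nat" where
  "prim_rec F G 0 ys = F ys"
| "prim_rec F G (Suc n) ys = G (n # prim_rec F G n ys # ys)"

lemma computable_prim_rec:
  assumes F: "computable m F" and G: "computable (Suc (Suc m)) G"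
  shows "computable (Suc m) (\<lambda>xs. prim_rec F G (hd xs) (tl xs))"
proof -
  obtain f where f: "\<forall>ys. length ys = m \<longrightarrow> rec_eval f ys (F ys)"
    using F unfolding computable_def by auto
  obtain g where g: "\<forall>ys. length ys = Suc (Suc m) \<longrightarrow> rec_eval g ys (G ys)"
    using G unfolding computable_def by auto
  have "rec_eval (Prim f g) (n # ys) (prim_rec F G n ys)" if "length ys = m" for n ys
    by (induction n) (use f g that in \<open>auto intro: ev_prim0 ev_primS\<close>)
  then show ?thesis unfolding computable_def
    by (intro exI[of _ "Prim f g"]) (auto simp: length_Suc_conv)
qed

lemma computable_Least:
  assumes F: "computable (Suc m) F" and ex: "\<And>ys. length ys = m
    \<Longrightarrow> \<exists>n. F (n # ys) = 0"
  shows "computable m (\<lambda>ys. LEAST n. F (n # ys) = 0)"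
proof -
  obtain f where f: "\<forall>ys. length ys = Suc m \<longrightarrow> rec_eval f ys (F ys)"
    using F unfolding computable_def by auto
  have "rec_eval (Mini f) ys (LEAST n. F (n # ys) = 0)" if "length ys = m" for ys
  proof (rule ev_mini)
    show "rec_eval f ((LEAST n. F (n # ys) = 0) # ys) 0"
      using f that LeastI_ex[OF ex[OF that]] by (metis length_Cons)
    show "\<forall>k<(LEAST n. F (n # ys) = 0). \<exists>y. rec_eval f (k # ys) y \<and> y > 0"
    proof (intro allI impI)
      fix k assume "k < (LEAST n. F (n # ys) = 0)"
      then have "F (k # ys) \<noteq> 0" by (rule not_less_Least)
      moreover have "rec_eval f (k # ys) (F (k # ys))" using f that by simp
      ultimately show "\<exists>y. rec_eval f (k # ys) y \<and> y > 0" by blast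
    qed
  qed
  then show ?thesis unfolding computable_def by blast
qed

lemma computable_comp1:
  "computable (Suc 0) H \<Longrightarrow> computable m f
    \<Longrightarrow> computable m (\<lambda>xs. H [f xs])"
  using computable_comp[of "[f]" H m] by simp

lemma computable_comp2:
  "computable (Suc (Suc 0)) H \<Longrightarrow> computable m f \<Longrightarrow> computable m g
    \<Longrightarrow> computable m (\<lambda>xs. H [f xs, g xs])"
  using computable_comp[of "[f,g]" H m] by simp

lemma computable_comp3:
  "computable (Suc (Suc (Suc 0))) H \<Longrightarrow> computable m f \<Longrightarrow> computable m g
    \<Longrightarrow> computable m h \<Longrightarrow>
    computable m (\<lambda>xs. H [f xs, g xs, h xs])"
  using computable_comp[of "[f,g,h]" H m] by simp

lemma computable_const[computable_intros]: "computable m (\<lambda>_. c)"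
proof (induction c)
  case 0 then show ?case by (rule computable_zero)
next
  case (Suc c)
  from computable_comp1[OF computable_Suc_nth0 this] show ?case by simp
qed

lemma computable_hd[computable_intros]: "computable (Suc m) (\<lambda>xs. hd xs)"
  by (rule computable_cong[OF computable_nth[of 0]]) (auto simp: length_Suc_conv)

lemma computable_Suc[computable_intros]:
  "computable m f \<Longrightarrow> computable m (\<lambda>xs. Suc (f xs))"
  using computable_comp1[OF computable_Suc_nth0] by simp

lemma prim_rec_pred: "prim_rec (\<lambda>_. 0) (\<lambda>ys. ys ! 0) n ys = n - 1"
  by (cases n) auto

lemma computable_pred_nth0: "computable (Suc 0) (\<lambda>xs. xs ! 0 - 1)"
proof -
  have "computable (Suc 0) (\<lambda>xs. prim_rec (\<lambda>_. 0) (\<lambda>ys. ys ! 0) (hd xs) (tl xs))"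
    by (rule computable_prim_rec) (auto intro: computable_const computable_nth)
  then show ?thesis by (rule computable_cong) (auto simp: length_Suc_conv prim_rec_pred)
qed

lemma computable_minus_1[computable_intros]:
  "computable m f \<Longrightarrow> computable m (\<lambda>xs. f xs - 1)"
  using computable_comp1[OF computable_pred_nth0] by simp

lemma prim_rec_add: "prim_rec (\<lambda>ys. ys ! 0) (\<lambda>ys. Suc (ys ! Suc 0)) n ys = n + ys ! 0"
  by (induction n) auto

lemma computable_add_nth: "computable (Suc (Suc 0)) (\<lambda>xs. xs ! 0 + xs ! 1)"
proof -
  have "computable (Suc (Suc 0)) (\<lambda>xs. prim_rec (\<lambda>ys. ys ! 0) (\<lambda>ys. Suc (ys ! Suc 0)) (hd xs) (tl xs))"
    by (rule computable_prim_rec) (auto intro: computable_Suc computable_nth)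
  then show ?thesis by (rule computable_cong) (auto simp: length_Suc_conv prim_rec_add)
qed

lemma computable_add[computable_intros]:
  "computable m f \<Longrightarrow> computable m g \<Longrightarrow> computable m (\<lambda>xs. f xs + g xs)"
  using computable_comp2[OF computable_add_nth] by simp

lemma computable_comp_unary:
  "computable (Suc 0) (\<lambda>v. h (v!0)) \<Longrightarrow> computable m f
    \<Longrightarrow> computable m (\<lambda>xs. h (f xs))"
  using computable_comp1[of "\<lambda>v. h (v!0)" m f] by simp
lemma computable_comp_binary:
  "computable (Suc (Suc 0)) (\<lambda>v. h (v!0) (v!Suc 0)) \<Longrightarrow> computable m f
    \<Longrightarrow> computable m g \<Longrightarrow> computable m (\<lambda>xs. h (f xs) (g xs))"
  using computable_comp2[of "\<lambda>v. h (v!0) (v!Suc 0)" m f g] by simp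
lemma computable_comp_ternary:
  "computable (Suc (Suc (Suc 0))) (\<lambda>v. h (v!0) (v!Suc 0) (v!Suc (Suc 0)))
    \<Longrightarrow> computable m f \<Longrightarrow> computable m g \<Longrightarrow> computable m k
    \<Longrightarrow> computable m (\<lambda>xs. h (f xs) (g xs) (k xs))"
  using computable_comp3[of "\<lambda>v. h (v!0) (v!Suc 0) (v!Suc (Suc 0))" m f g k] by simp

lemma computable_prim_rec_comp:
  "computable m F \<Longrightarrow> computable (Suc (Suc m)) G \<Longrightarrow> computable k N
    \<Longrightarrow> \<forall>a\<in>set As. computable k a \<Longrightarrow> length As = m
  \<Longrightarrow> computable k (\<lambda>xs. prim_rec F G (N xs) (map (\<lambda>a. a xs) As))"
proof -
  assume a: "computable m F" "computable (Suc (Suc m)) G" "computable k N" "\<forall>a\<in>set As. computable k a" "length As = m"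
  have "computable (Suc m) (\<lambda>v. prim_rec F G (hd v) (tl v))" by (rule computable_prim_rec[OF a(1,2)])
  then have "computable k (\<lambda>xs. (\<lambda>v. prim_rec F G (hd v) (tl v)) (map (\<lambda>g. g xs) (N # As)))"
    by (intro computable_comp) (use a in auto)
  then show ?thesis by simp
qed

lemma computable_minus_Suc_0[computable_intros]:
  "computable m f \<Longrightarrow> computable m (\<lambda>xs. f xs - Suc 0)"
  using computable_minus_1[of m f] by simp

lemma prim_rec_diff: "prim_rec (\<lambda>ys. ys!0) (\<lambda>ys. ys!Suc 0 - Suc 0) n [a] = a - n"
  by (induction n) auto
lemma computable_diff[computable_intros]:
  "computable m f \<Longrightarrow> computable m g \<Longrightarrow> computable m (\<lambda>xs. f xs - g xs)"
proof (rule computable_comp_binary[where h="(-)"])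
  have "computable (Suc (Suc 0)) (\<lambda>xs. prim_rec (\<lambda>ys. ys!0) (\<lambda>ys. ys!Suc 0 - 1) (xs!Suc 0) (map (\<lambda>a. a xs) [\<lambda>v. v!0]))"
    by (rule computable_prim_rec_comp) (auto intro!: computable_intros computable_minus_1)
  then show "computable (Suc (Suc 0)) (\<lambda>v. v ! 0 - v ! Suc 0)" by (simp add: prim_rec_diff)
qed

lemma prim_rec_mult: "prim_rec (\<lambda>_. 0) (\<lambda>ys. ys!Suc 0 + ys!Suc (Suc 0)) n [b] = n * b"
  by (induction n) auto
lemma computable_mult[computable_intros]:
  "computable m f \<Longrightarrow> computable m g \<Longrightarrow> computable m (\<lambda>xs. f xs * g xs)"
proof (rule computable_comp_binary[where h="(*)"])
  have "computable (Suc (Suc 0)) (\<lambda>xs. prim_rec (\<lambda>_. 0) (\<lambda>ys. ys!Suc 0 + ys!Suc (Suc 0)) (xs!0) (map (\<lambda>a. a xs) [\<lambda>v. v!Suc 0]))"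
    by (rule computable_prim_rec_comp) (auto intro!: computable_intros)
  then show "computable (Suc (Suc 0)) (\<lambda>v. v ! 0 * v ! Suc 0)" by (simp add: prim_rec_mult)
qed

lemma prim_rec_if_zero:
  "prim_rec (\<lambda>ys. ys!0) (\<lambda>ys. ys!Suc (Suc (Suc 0))) n [a, b] = (if n = 0 then a else b)"
  by (induction n) auto
lemma computable_if_zero:
  "computable m c \<Longrightarrow> computable m f \<Longrightarrow> computable m g
    \<Longrightarrow> computable m (\<lambda>xs. if c xs = 0 then f xs else g xs)"
proof (rule computable_comp_ternary[where h="\<lambda>c a b. if c = 0 then a else b"])
  have "computable (Suc (Suc (Suc 0))) (\<lambda>xs. prim_rec (\<lambda>ys. ys!0) (\<lambda>ys. ys!Suc (Suc (Suc 0))) (xs!0) (map (\<lambda>a. a xs) [\<lambda>v. v!Suc 0, \<lambda>v. v!Suc (Suc 0)]))"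
    by (rule computable_prim_rec_comp) (auto intro!: computable_intros)
  then show "computable (Suc (Suc (Suc 0))) (\<lambda>v. if v ! 0 = 0 then v ! Suc 0 else v ! Suc (Suc 0))" by (simp add: prim_rec_if_zero)
qed

definition decidable :: "nat \<Rightarrow> (nat list \<Rightarrow> bool) \<Rightarrow> bool" where
  "decidable m P \<longleftrightarrow> computable m (\<lambda>xs. if P xs then 1 else 0)"

lemma decidable_cong:
  "decidable m P \<Longrightarrow> (\<And>xs. length xs = m \<Longrightarrow> P xs
    \<longleftrightarrow> Q xs) \<Longrightarrow> decidable m Q"
  unfolding decidable_def by (erule computable_cong) simp

lemma computable_if[computable_intros]:
  "decidable m P \<Longrightarrow> computable m f \<Longrightarrow> computable m g
    \<Longrightarrow> computable m (\<lambda>xs. if P xs then f xs else g xs)"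
  unfolding decidable_def
  by (rule computable_cong[OF computable_if_zero[of m "\<lambda>xs. if P xs then 1 else 0" g f]]) auto

lemma decidable_eq[computable_intros]:
  "computable m f \<Longrightarrow> computable m g \<Longrightarrow> decidable m (\<lambda>xs. f xs = g xs)"
  unfolding decidable_def
  by (rule computable_cong[of m "\<lambda>xs. 1 - ((f xs - g xs) + (g xs - f xs))"]) (auto intro!: computable_intros)

lemma decidable_less[computable_intros]:
  "computable m f \<Longrightarrow> computable m g \<Longrightarrow> decidable m (\<lambda>xs. f xs < g xs)"
  unfolding decidable_def
  by (rule computable_cong[of m "\<lambda>xs. 1 - (1 - (g xs - f xs))"]) (auto intro!: computable_intros)

lemma decidable_le[computable_intros]:
  "computable m f \<Longrightarrow> computable m g
    \<Longrightarrow> decidable m (\<lambda>xs. f xs \<le> g xs)"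
  using decidable_less[of m f "\<lambda>xs. Suc (g xs)"] by (simp add: less_Suc_eq_le computable_Suc)

lemma decidable_not[computable_intros]:
  "decidable m P \<Longrightarrow> decidable m (\<lambda>xs. \<not> P xs)"
  unfolding decidable_def
  by (rule computable_cong[of m "\<lambda>xs. 1 - (if P xs then 1 else 0)"]) (auto intro!: computable_intros simp: decidable_def)

lemma decidable_conj[computable_intros]:
  "decidable m P \<Longrightarrow> decidable m Q
    \<Longrightarrow> decidable m (\<lambda>xs. P xs \<and> Q xs)"
  unfolding decidable_def
  by (rule computable_cong[of m "\<lambda>xs. (if P xs then 1 else 0) * (if Q xs then 1 else 0)"]) (auto intro!: computable_intros simp: decidable_def)

lemma decidable_disj[computable_intros]:
  "decidable m P \<Longrightarrow> decidable m Q \<Longrightarrow> decidable m (\<lambda>xs. P xs \<or> Q xs)"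
  using decidable_not[OF decidable_conj[OF decidable_not decidable_not], of m P Q] by simp

lemma prim_rec_even:
  "prim_rec (\<lambda>_. Suc 0) (\<lambda>ys. Suc 0 - ys!Suc 0) n [] = (if even n then 1 else 0)"
  by (induction n) auto
lemma decidable_even[computable_intros]:
  "computable m f \<Longrightarrow> decidable m (\<lambda>xs. even (f xs))"
  unfolding decidable_def
proof (rule computable_comp_unary[where h="\<lambda>n. if even n then 1 else 0"])
  have "computable (Suc 0) (\<lambda>xs. prim_rec (\<lambda>_. Suc 0) (\<lambda>ys. Suc 0 - ys!Suc 0) (xs!0) (map (\<lambda>a. a xs) []))"
    by (rule computable_prim_rec_comp) (auto intro!: computable_intros)
  then show "computable (Suc 0) (\<lambda>v. if even (v ! 0) then 1 else 0)" by (simp add: prim_rec_even)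
qed

lemma prim_rec_div2:
  "prim_rec (\<lambda>_. 0) (\<lambda>ys. ys!Suc 0 + (if even (ys!0) then 0 else 1)) n [] = n div 2"
  by (induction n) auto
lemma computable_div2[computable_intros]:
  "computable m f \<Longrightarrow> computable m (\<lambda>xs. f xs div 2)"
proof (rule computable_comp_unary[where h="\<lambda>n. n div 2"])
  have "computable (Suc 0) (\<lambda>xs. prim_rec (\<lambda>_. 0) (\<lambda>ys. ys!Suc 0 + (if even (ys!0) then 0 else 1)) (xs!0) (map (\<lambda>a. a xs) []))"
    by (rule computable_prim_rec_comp) (auto intro!: computable_intros)
  then show "computable (Suc 0) (\<lambda>v. v ! 0 div 2)" by (simp add: prim_rec_div2)
qed

lemma prim_rec_triangle: "prim_rec (\<lambda>_. 0) (\<lambda>ys. Suc (ys!Suc 0 + ys!0)) n [] = triangle n"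
  by (induction n) auto
lemma computable_triangle[computable_intros]:
  "computable m f \<Longrightarrow> computable m (\<lambda>xs. triangle (f xs))"
proof (rule computable_comp_unary[where h="triangle"])
  have "computable (Suc 0) (\<lambda>xs. prim_rec (\<lambda>_. 0) (\<lambda>ys. Suc (ys!Suc 0 + ys!0)) (xs!0) (map (\<lambda>a. a xs) []))"
    by (rule computable_prim_rec_comp) (auto intro!: computable_intros)
  then show "computable (Suc 0) (\<lambda>v. triangle (v ! 0))" by (simp add: prim_rec_triangle)
qed

lemma prim_rec_power: "prim_rec (\<lambda>_. Suc 0) (\<lambda>ys. ys!Suc 0 * ys!Suc (Suc 0)) n [b] = b ^ n"
  by (induction n) auto
lemma computable_power[computable_intros]:
  "computable m f \<Longrightarrow> computable m g \<Longrightarrow> computable m (\<lambda>xs. f xs ^ g xs)"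
proof (rule computable_comp_binary[where h="\<lambda>a b. a ^ b"])
  have "computable (Suc (Suc 0)) (\<lambda>xs. prim_rec (\<lambda>_. Suc 0) (\<lambda>ys. ys!Suc 0 * ys!Suc (Suc 0)) (xs!Suc 0) (map (\<lambda>a. a xs) [\<lambda>v. v!0]))"
    by (rule computable_prim_rec_comp) (auto intro!: computable_intros)
  then show "computable (Suc (Suc 0)) (\<lambda>v. v ! 0 ^ v ! Suc 0)" by (simp add: prim_rec_power)
qed

lemma computable_prod_encode[computable_intros]:
  "computable m f \<Longrightarrow> computable m g
    \<Longrightarrow> computable m (\<lambda>xs. prod_encode (f xs, g xs))"
  unfolding prod_encode_def by (auto intro!: computable_intros)

definition prod_decode_diag :: "nat \<Rightarrow> nat" where "prod_decode_diag k = (LEAST s. k < triangle (Suc s))"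

lemma less_triangle_Suc_self: "k < triangle (Suc k)"
  by (induction k) auto

lemma prod_decode_diag_bounds:
  "k < triangle (Suc (prod_decode_diag k))" "triangle (prod_decode_diag k) \<le> k"
proof -
  show a: "k < triangle (Suc (prod_decode_diag k))" unfolding prod_decode_diag_def by (rule LeastI[of _ k]) (rule less_triangle_Suc_self)
  show "triangle (prod_decode_diag k) \<le> k"
  proof (cases "prod_decode_diag k")
    case 0 then show ?thesis by simp
  next
    case (Suc s)
    then have "s < prod_decode_diag k" by simp
    then have "\<not> k < triangle (Suc s)" unfolding prod_decode_diag_def by (rule not_less_Least)
    then show ?thesis using Suc by simp
  qed
qed

lemma prod_decode_via_diag:
  "prod_decode k = (k - triangle (prod_decode_diag k), prod_decode_diag k - (k - triangle (prod_decode_diag k)))"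
proof -
  let ?a = "k - triangle (prod_decode_diag k)" and ?b = "prod_decode_diag k - (k - triangle (prod_decode_diag k))"
  have "prod_encode (?a, ?b) = k" using prod_decode_diag_bounds[of k] unfolding prod_encode_def
    by (simp add: le_add_diff_inverse)
  then show ?thesis by (metis prod_encode_inverse)
qed

lemma computable_prod_decode_diag_nth0: "computable (Suc 0) (\<lambda>v. prod_decode_diag (v!0))"
proof -
  let ?F = "\<lambda>v::nat list. if v!Suc 0 < triangle (Suc (v!0)) then 0 else (1::nat)"
  have a: "computable (Suc (Suc 0)) ?F" by (auto intro!: computable_intros)
  have b: "\<exists>n. ?F (n#ys) = 0" if "length ys = Suc 0" for ys
    using less_triangle_Suc_self[of "ys!0"] by (intro exI[of _ "ys ! 0"]) simp
  from computable_Least[OF a b] have "computable (Suc 0) (\<lambda>ys. LEAST n. ?F (n # ys) = 0)" .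
  then show ?thesis by (rule computable_cong) (simp add: prod_decode_diag_def)
qed

lemma computable_prod_decode_diag[computable_intros]:
  "computable m f \<Longrightarrow> computable m (\<lambda>xs. prod_decode_diag (f xs))"
  by (rule computable_comp_unary[OF computable_prod_decode_diag_nth0])

lemma computable_fst_prod_decode[computable_intros]:
  "computable m f \<Longrightarrow> computable m (\<lambda>xs. fst (prod_decode (f xs)))"
  unfolding prod_decode_via_diag by (auto intro!: computable_intros)
lemma computable_snd_prod_decode[computable_intros]:
  "computable m f \<Longrightarrow> computable m (\<lambda>xs. snd (prod_decode (f xs)))"
  unfolding prod_decode_via_diag by (auto intro!: computable_intros)

declare upt_Suc[simp del]

lemma map_nth_upt_drop:
  "length xs = m \<Longrightarrow> map (\<lambda>g. g xs) (map (\<lambda>j xs. xs ! j) [a..<m]) = drop a xs"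
  by (rule nth_equalityI) auto

lemma map_nth_upt_drop'[simp]:
  "length xs = m \<Longrightarrow> map ((\<lambda>g. g xs) \<circ> (\<lambda>j xs. xs ! j)) [a..<m] = drop a xs"
  by (rule nth_equalityI) auto

lemma computable_projs: "\<forall>g\<in>set (map (\<lambda>j xs. xs ! j) [a..<m]). computable m g"
  by (auto intro: computable_nth)

lemma decidable_comp:
  "decidable (length Gs) Q \<Longrightarrow> \<forall>g\<in>set Gs. computable m g
    \<Longrightarrow> decidable m (\<lambda>xs. Q (map (\<lambda>g. g xs) Gs))"
  unfolding decidable_def using computable_comp[of Gs "\<lambda>ys. if Q ys then 1 else 0" m] by simp

lemma computable_prod_list:
  "\<forall>g\<in>set Hs. computable m g
    \<Longrightarrow> computable m (\<lambda>v. prod_list (map (\<lambda>h. h v) Hs))"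
proof (induction Hs)
  case Nil then show ?case by (simp add: computable_const)
next
  case (Cons h Hs)
  then show ?case by (simp add: computable_mult)
qed

lemma decidable_comp1:
  "decidable 1 Q \<Longrightarrow> computable m f \<Longrightarrow> decidable m (\<lambda>xs. Q [f xs])"
  using decidable_comp[of "[f]" Q m] by simp

lemma decidable_comp2:
  "decidable 2 Q \<Longrightarrow> computable m f \<Longrightarrow> computable m g
    \<Longrightarrow> decidable m (\<lambda>xs. Q [f xs, g xs])"
  using decidable_comp[of "[f, g]" Q m] by (simp add: numeral_2_eq_2)

section \<open>Step-bounded evaluation\<close>

text \<open>The least k < n with P k, or n if there is none: a primitive recursive substitute
  for LEAST.\<close>

primrec bounded_least :: "(nat \<Rightarrow> bool) \<Rightarrow> nat \<Rightarrow> nat" where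
  "bounded_least P 0 = 0"
| "bounded_least P (Suc n) = (if bounded_least P n < n then bounded_least P n else if P n then n else Suc n)"

declare bounded_least.simps(2)[simp del]

lemma bounded_least_cases:
  "(bounded_least P n < n \<and> P (bounded_least P n) \<and> (\<forall>k<bounded_least P n. \<not> P k)) \<or> (bounded_least P n = n \<and> (\<forall>k<n. \<not> P k))"
proof (induction n)
  case 0 then show ?case by simp
next
  case (Suc n)
  then show ?case
  proof
    assume a: "bounded_least P n < n \<and> P (bounded_least P n) \<and> (\<forall>k<bounded_least P n. \<not> P k)"
    then have "bounded_least P (Suc n) = bounded_least P n" by (simp add: bounded_least.simps)
    then show ?thesis using a by simp
  next
    assume a: "bounded_least P n = n \<and> (\<forall>k<n. \<not> P k)"
    show ?thesis
    proof (cases "P n")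
      case True
      then have "bounded_least P (Suc n) = n" using a by (simp add: bounded_least.simps)
      then show ?thesis using a True by simp
    next
      case False
      then have "bounded_least P (Suc n) = Suc n" using a by (simp add: bounded_least.simps)
      moreover have "\<forall>k<Suc n. \<not> P k" using a False less_Suc_eq by auto
      ultimately show ?thesis by simp
    qed
  qed
qed

lemma bounded_least_eqI:
  "m < n \<Longrightarrow> P m \<Longrightarrow> (\<forall>k<m. \<not> P k)
    \<Longrightarrow> bounded_least P n = m"
  using bounded_least_cases[of P n] by (metis linorder_neqE_nat)

lemma bounded_least_less:
  "bounded_least P n < n
    \<Longrightarrow> P (bounded_least P n) \<and> (\<forall>k<bounded_least P n. \<not> P k)"
  using bounded_least_cases[of P n] by auto

text \<open>Evaluation of a program in which every unbounded search is cut off at s. The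
  result Suc y means that the value y has been found, 0 that the bound was too small.
  A program halts iff some bound suffices, and for fixed p the function (s, xs) \<mapsto>
  bounded_eval p s xs is computable: this is Kleene's normal form theorem.\<close>

primrec bounded_eval :: "recf \<Rightarrow> nat \<Rightarrow> nat list \<Rightarrow> nat" where
  "bounded_eval Zero = (\<lambda>s xs. 1)"
| "bounded_eval Succ = (\<lambda>s xs. case xs of [] \<Rightarrow> 0 | x # _ \<Rightarrow> Suc (Suc x))"
| "bounded_eval (Proj i) = (\<lambda>s xs. if i < length xs then Suc (xs ! i) else 0)"
| "bounded_eval (Comp f gs) = (\<lambda>s xs. if (\<exists>c\<in>set (map bounded_eval gs). c s xs = 0) then 0
      else bounded_eval f s (map (\<lambda>c. c s xs - 1) (map bounded_eval gs)))"
| "bounded_eval (Prim f g) = (\<lambda>s xs. case xs of [] \<Rightarrow> 0 | n # ys \<Rightarrow>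
      rec_nat (bounded_eval f s ys) (\<lambda>i r. if r = 0 then 0 else bounded_eval g s (i # (r - 1) # ys)) n)"
| "bounded_eval (Mini f) = (\<lambda>s xs. let m0 = bounded_least (\<lambda>m. bounded_eval f s (m # xs) \<le> 1) (Suc s) in
      if m0 \<le> s \<and> bounded_eval f s (m0 # xs) = 1 then Suc m0 else 0)"

lemma bounded_eval_mono_Comp:
  assumes f: "\<And>s t xs y. bounded_eval f s xs = Suc y \<Longrightarrow> s \<le> t
    \<Longrightarrow> bounded_eval f t xs = Suc y"
    and gs: "\<And>g s t xs y. g \<in> set gs \<Longrightarrow> bounded_eval g s xs = Suc y
      \<Longrightarrow> s \<le> t \<Longrightarrow> bounded_eval g t xs = Suc y"
    and prems: "bounded_eval (Comp f gs) s xs = Suc y" "s \<le> t"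
  shows "bounded_eval (Comp f gs) t xs = Suc y"
proof -
  from prems have nz: "\<forall>g\<in>set gs. bounded_eval g s xs \<noteq> 0" by (auto split: if_splits)
  have eq: "\<forall>g\<in>set gs. bounded_eval g t xs = bounded_eval g s xs"
  proof
    fix g assume g: "g \<in> set gs"
    then obtain z where z: "bounded_eval g s xs = Suc z" using nz not0_implies_Suc by blast
    from gs[OF g z prems(2)] show "bounded_eval g t xs = bounded_eval g s xs" using z by simp
  qed
  then have m: "map (\<lambda>g. bounded_eval g t xs - 1) gs = map (\<lambda>g. bounded_eval g s xs - 1) gs" by simp
  have nz2: "\<not> (\<exists>c\<in>set (map bounded_eval gs). c t xs = 0)" using nz eq by simp
  have nz1: "\<not> (\<exists>c\<in>set (map bounded_eval gs). c s xs = 0)" using nz by simp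
  have "bounded_eval (Comp f gs) s xs = bounded_eval f s (map (\<lambda>c. c s xs - 1) (map bounded_eval gs))"
    using nz1 by (simp only: bounded_eval.simps if_False)
  then have fs: "bounded_eval f s (map (\<lambda>g. bounded_eval g s xs - 1) gs) = Suc y"
    using prems(1) by (simp add: comp_def)
  have "bounded_eval (Comp f gs) t xs = bounded_eval f t (map (\<lambda>c. c t xs - 1) (map bounded_eval gs))"
    using nz2 by (simp only: bounded_eval.simps if_False)
  also have "\<dots> = bounded_eval f t (map (\<lambda>g. bounded_eval g t xs - 1) gs)" by (simp add: comp_def)
  also have "\<dots> = Suc y" unfolding m by (rule f[OF fs prems(2)])
  finally show ?thesis .
qed

lemma bounded_eval_mono_Prim:
  assumes f: "\<And>s t xs y. bounded_eval f s xs = Suc y \<Longrightarrow> s \<le> t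
    \<Longrightarrow> bounded_eval f t xs = Suc y"
    and g: "\<And>s t xs y. bounded_eval g s xs = Suc y \<Longrightarrow> s \<le> t
      \<Longrightarrow> bounded_eval g t xs = Suc y"
    and prems: "bounded_eval (Prim f g) s xs = Suc y" "s \<le> t"
  shows "bounded_eval (Prim f g) t xs = Suc y"
proof (cases xs)
  case Nil then show ?thesis using prems(1) by simp
next
  case (Cons n ys)
  have "rec_nat (bounded_eval f s ys) (\<lambda>i r. if r = 0 then 0 else bounded_eval g s (i # (r - 1) # ys)) n = Suc y \<Longrightarrow>
        rec_nat (bounded_eval f t ys) (\<lambda>i r. if r = 0 then 0 else bounded_eval g t (i # (r - 1) # ys)) n = Suc y" for y
  proof (induction n arbitrary: y)
    case 0
    then have "bounded_eval f s ys = Suc y" by simp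
    from f[OF this prems(2)] show ?case by simp
  next
    case (Suc n)
    let ?r = "rec_nat (bounded_eval f s ys) (\<lambda>i r. if r = 0 then 0 else bounded_eval g s (i # (r - 1) # ys)) n"
    from Suc.prems have "?r \<noteq> 0" by (auto split: if_splits)
    then obtain z where z: "?r = Suc z" using not0_implies_Suc by blast
    with Suc.IH have "rec_nat (bounded_eval f t ys) (\<lambda>i r. if r = 0 then 0 else bounded_eval g t (i # (r - 1) # ys)) n = Suc z" .
    moreover have gs: "bounded_eval g s (n # z # ys) = Suc y" using Suc.prems z by simp
    note g[OF gs prems(2)]
    ultimately show ?case by simp
  qed
  then show ?thesis using prems Cons by simp
qed

lemma bounded_eval_mono_Mini:
  assumes f: "\<And>s t xs y. bounded_eval f s xs = Suc y \<Longrightarrow> s \<le> t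
    \<Longrightarrow> bounded_eval f t xs = Suc y"
    and prems: "bounded_eval (Mini f) s xs = Suc y" "s \<le> t"
  shows "bounded_eval (Mini f) t xs = Suc y"
proof -
  let ?P = "\<lambda>s m. bounded_eval f s (m # xs) \<le> 1"
  let ?m0 = "bounded_least (?P s) (Suc s)"
  from prems have h: "?m0 \<le> s" "bounded_eval f s (?m0 # xs) = 1" "y = ?m0"
    by (auto simp: Let_def split: if_splits)
  then have lt: "?m0 < Suc s" by simp
  from bounded_least_less[OF lt] have below: "\<forall>k<?m0. \<not> ?P s k" by blast
  have h2: "bounded_eval f s (?m0 # xs) = Suc 0" using h(2) by simp
  have a: "bounded_eval f t (?m0 # xs) = 1" using f[OF h2 prems(2)] by simp
  have b: "\<forall>k<?m0. \<not> ?P t k"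
  proof (intro allI impI)
    fix k assume k: "k < ?m0"
    then have "bounded_eval f s (k # xs) > 1" using below not_le by blast
    then obtain z where z: "bounded_eval f s (k # xs) = Suc z" "z > 0" by (cases "bounded_eval f s (k # xs)") auto
    have "bounded_eval f t (k # xs) = Suc z" by (rule f[OF z(1) prems(2)])
    then show "\<not> ?P t k" using z(2) by simp
  qed
  have lt2: "?m0 < Suc t" using h(1) prems(2) by simp
  have bt: "bounded_least (?P t) (Suc t) = ?m0"
    by (rule bounded_least_eqI[OF lt2]) (use a b in auto)
  have c: "?m0 \<le> t \<and> bounded_eval f t (?m0 # xs) = 1" using a lt2 by simp
  have "bounded_eval (Mini f) t xs = (if ?m0 \<le> t \<and> bounded_eval f t (?m0 # xs) = 1 then Suc ?m0 else 0)"
    by (simp only: bounded_eval.simps Let_def bt)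
  then show ?thesis using c h(3) by simp
qed

lemma bounded_eval_mono:
  "bounded_eval p s xs = Suc y \<Longrightarrow> s \<le> t \<Longrightarrow> bounded_eval p t xs = Suc y"
proof (induction p arbitrary: s t xs y)
  case Zero then show ?case by simp
next
  case Succ then show ?case by simp
next
  case (Proj i) then show ?case by simp
next
  case (Comp f gs)
  then show ?case by (rule bounded_eval_mono_Comp)
next
  case (Prim f g)
  then show ?case by (rule bounded_eval_mono_Prim)
next
  case (Mini f)
  then show ?case by (rule bounded_eval_mono_Mini)
qed

lemma bounded_eval_sound_Comp:
  assumes f: "\<And>xs y. bounded_eval f s xs = Suc y \<Longrightarrow> rec_eval f xs y"
    and gs: "\<And>g xs y. g \<in> set gs \<Longrightarrow> bounded_eval g s xs = Suc y
      \<Longrightarrow> rec_eval g xs y"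
    and prems: "bounded_eval (Comp f gs) s xs = Suc y"
  shows "rec_eval (Comp f gs) xs y"
proof -
  from prems have nz: "\<forall>g\<in>set gs. bounded_eval g s xs \<noteq> 0" by (auto split: if_splits)
  let ?ys = "map (\<lambda>g. bounded_eval g s xs - 1) gs"
  have fy: "bounded_eval f s ?ys = Suc y" using prems nz by (auto split: if_splits simp: comp_def)
  show ?thesis
  proof (rule ev_comp[of ?ys])
    show "length ?ys = length gs" by simp
    show "\<forall>i<length gs. rec_eval (gs ! i) xs (?ys ! i)"
    proof (intro allI impI)
      fix i assume i: "i < length gs"
      then have g: "gs ! i \<in> set gs" by simp
      then have "bounded_eval (gs ! i) s xs = Suc (?ys ! i)" using nz i by simp
      then show "rec_eval (gs ! i) xs (?ys ! i)" using gs[OF g] by blast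
    qed
    show "rec_eval f ?ys y" using f fy by blast
  qed
qed

lemma bounded_eval_sound_Prim:
  assumes f: "\<And>xs y. bounded_eval f s xs = Suc y \<Longrightarrow> rec_eval f xs y"
    and g: "\<And>xs y. bounded_eval g s xs = Suc y \<Longrightarrow> rec_eval g xs y"
    and prems: "bounded_eval (Prim f g) s xs = Suc y"
  shows "rec_eval (Prim f g) xs y"
proof -
  obtain n ys where xs: "xs = n # ys" using prems by (cases xs) auto
  have "rec_nat (bounded_eval f s ys) (\<lambda>i r. if r = 0 then 0 else bounded_eval g s (i # (r - 1) # ys)) n = Suc y \<Longrightarrow>
        rec_eval (Prim f g) (n # ys) y" for y
  proof (induction n arbitrary: y)
    case 0 then show ?case using f by (auto intro: ev_prim0)
  next
    case (Suc n)
    let ?r = "rec_nat (bounded_eval f s ys) (\<lambda>i r. if r = 0 then 0 else bounded_eval g s (i # (r - 1) # ys)) n"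
    from Suc.prems have "?r \<noteq> 0" by (auto split: if_splits)
    then obtain z where z: "?r = Suc z" using not0_implies_Suc by blast
    then have "rec_eval (Prim f g) (n # ys) z" using Suc.IH by blast
    moreover have "rec_eval g (n # z # ys) y" using Suc.prems z g by auto
    ultimately show ?case by (rule ev_primS)
  qed
  then show ?thesis using prems xs by simp
qed

lemma bounded_eval_sound_Mini:
  assumes f: "\<And>xs y. bounded_eval f s xs = Suc y \<Longrightarrow> rec_eval f xs y"
    and prems: "bounded_eval (Mini f) s xs = Suc y"
  shows "rec_eval (Mini f) xs y"
proof -
  let ?P = "\<lambda>m. bounded_eval f s (m # xs) \<le> 1"
  let ?m0 = "bounded_least ?P (Suc s)"
  from prems have h: "?m0 \<le> s" "bounded_eval f s (?m0 # xs) = 1" "y = ?m0"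
    by (auto simp: Let_def split: if_splits)
  then have lt: "?m0 < Suc s" by simp
  from bounded_least_less[OF lt] have below: "\<forall>k<?m0. \<not> ?P k" by blast
  show ?thesis unfolding h(3)
  proof (rule ev_mini)
    show "rec_eval f (?m0 # xs) 0" using f h(2) by simp
    show "\<forall>m<?m0. \<exists>y. rec_eval f (m # xs) y \<and> 0 < y"
    proof (intro allI impI)
      fix k assume k: "k < ?m0"
      then have "bounded_eval f s (k # xs) > 1" using below not_le by blast
      then obtain z where "bounded_eval f s (k # xs) = Suc z" "z > 0" by (cases "bounded_eval f s (k # xs)") auto
      then show "\<exists>y. rec_eval f (k # xs) y \<and> 0 < y" using f by blast
    qed
  qed
qed

lemma bounded_eval_sound: "bounded_eval p s xs = Suc y \<Longrightarrow> rec_eval p xs y"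
proof (induction p arbitrary: xs y)
  case Zero then show ?case by (auto intro: ev_zero)
next
  case Succ then show ?case by (auto split: list.splits intro: ev_succ)
next
  case (Proj i) then show ?case by (auto split: if_splits intro: ev_proj)
next
  case (Comp f gs)
  then show ?case by (rule bounded_eval_sound_Comp)
next
  case (Prim f g)
  then show ?case by (rule bounded_eval_sound_Prim)
next
  case (Mini f)
  then show ?case by (rule bounded_eval_sound_Mini)
qed

lemma ex_common_bound:
  "(\<forall>i<(n::nat). \<exists>s::nat. \<forall>t\<ge>s. P i t)
    \<Longrightarrow> \<exists>s. \<forall>i<n. \<forall>t\<ge>s. P i t"
proof (induction n)
  case 0 then show ?case by simp
next
  case (Suc n)
  then obtain s1 where s1: "\<forall>i<n. \<forall>t\<ge>s1. P i t" by auto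
  from Suc.prems obtain s2 where s2: "\<forall>t\<ge>s2. P n t" by auto
  show ?case
    by (rule exI[of _ "max s1 s2"]) (use s1 s2 in \<open>auto simp: less_Suc_eq\<close>)
qed

lemma bounded_eval_complete_Comp:
  assumes len: "length ys = length gs"
    and gs: "\<forall>i<length gs. \<exists>s. bounded_eval (gs ! i) s xs = Suc (ys ! i)"
    and f: "\<exists>s. bounded_eval f s ys = Suc z"
  shows "\<exists>s. bounded_eval (Comp f gs) s xs = Suc z"
proof -
  have "\<forall>i<length gs. \<exists>s. \<forall>t\<ge>s. bounded_eval (gs ! i) t xs = Suc (ys ! i)"
  proof (intro allI impI)
    fix i assume i: "i < length gs"
    with gs obtain s where s: "bounded_eval (gs ! i) s xs = Suc (ys ! i)" by blast
    show "\<exists>s. \<forall>t\<ge>s. bounded_eval (gs ! i) t xs = Suc (ys ! i)"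
      by (rule exI[of _ s]) (use bounded_eval_mono[OF s] in blast)
  qed
  from ex_common_bound[of "length gs" "\<lambda>i t. bounded_eval (gs ! i) t xs = Suc (ys ! i)", OF this]
  obtain s1 where s1: "\<forall>i<length gs. \<forall>t\<ge>s1. bounded_eval (gs ! i) t xs = Suc (ys ! i)" by blast
  obtain s2 where s2: "bounded_eval f s2 ys = Suc z" using f by blast
  let ?s = "max s1 s2"
  have m: "map (\<lambda>g. bounded_eval g ?s xs) gs = map Suc ys"
    by (rule nth_equalityI) (use s1 len in auto)
  have nz0: "\<forall>g\<in>set gs. bounded_eval g ?s xs \<noteq> 0"
  proof
    fix g assume "g \<in> set gs"
    then obtain i where i: "i < length gs" "gs ! i = g" by (auto simp: in_set_conv_nth)
    then show "bounded_eval g ?s xs \<noteq> 0" using s1 by auto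
  qed
  then have nz: "\<not> (\<exists>c\<in>set (map bounded_eval gs). c ?s xs = 0)" by simp
  have m2: "map (\<lambda>g. bounded_eval g ?s xs - 1) gs = ys"
    using arg_cong[OF m, of "map (\<lambda>x. x - 1)"] by (simp add: comp_def)
  have "bounded_eval (Comp f gs) ?s xs = bounded_eval f ?s (map (\<lambda>c. c ?s xs - 1) (map bounded_eval gs))"
    using nz by (simp only: bounded_eval.simps if_False)
  also have "\<dots> = bounded_eval f ?s ys" using m2 by (simp add: comp_def)
  also have "\<dots> = Suc z" using bounded_eval_mono[OF s2] by simp
  finally show ?thesis by blast
qed

lemma bounded_eval_complete_Mini:
  assumes f: "\<exists>s. bounded_eval f s (n # xs) = Suc 0"
    and below: "\<forall>m<n. \<exists>y s. bounded_eval f s (m # xs) = Suc y \<and> y > 0"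
  shows "\<exists>s. bounded_eval (Mini f) s xs = Suc n"
proof -
  from f obtain s0 where s0: "bounded_eval f s0 (n # xs) = Suc 0" by blast
  have "\<forall>m<n. \<exists>s. \<forall>t\<ge>s. bounded_eval f t (m # xs) > 1"
  proof (intro allI impI)
    fix m assume "m < n"
    then obtain y s where y: "bounded_eval f s (m # xs) = Suc y" "y > 0" using below by blast
    show "\<exists>s. \<forall>t\<ge>s. bounded_eval f t (m # xs) > 1"
      by (rule exI[of _ s]) (use bounded_eval_mono[OF y(1)] y(2) in auto)
  qed
  from ex_common_bound[of n "\<lambda>m t. bounded_eval f t (m # xs) > 1", OF this]
  obtain s1 where s1: "\<forall>m<n. \<forall>t\<ge>s1. bounded_eval f t (m # xs) > 1" by blast
  let ?s = "max (max s0 s1) n"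
  have a: "bounded_eval f ?s (n # xs) = 1" using bounded_eval_mono[OF s0, of ?s] by simp
  have b: "\<forall>k<n. \<not> bounded_eval f ?s (k # xs) \<le> 1" using s1 by (simp add: not_le)
  have bt: "bounded_least (\<lambda>m. bounded_eval f ?s (m # xs) \<le> 1) (Suc ?s) = n"
    by (rule bounded_least_eqI) (use a b in auto)
  have c: "n \<le> ?s \<and> bounded_eval f ?s (n # xs) = 1" using a by simp
  have "bounded_eval (Mini f) ?s xs = (if n \<le> ?s \<and> bounded_eval f ?s (n # xs) = 1 then Suc n else 0)"
    by (simp only: bounded_eval.simps Let_def bt)
  then have "bounded_eval (Mini f) ?s xs = Suc n" using c by simp
  then show ?thesis by blast
qed

lemma bounded_eval_complete: "rec_eval p xs y \<Longrightarrow> \<exists>s. bounded_eval p s xs = Suc y"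
proof (induction rule: rec_eval.induct)
  case (ev_zero xs) then show ?case by simp
next
  case (ev_succ x xs) then show ?case by simp
next
  case (ev_proj i xs) then show ?case by simp
next
  case (ev_comp ys gs xs f z)
  then show ?case by (intro bounded_eval_complete_Comp) blast+
next
  case (ev_prim0 f xs y g)
  then obtain s where "bounded_eval f s xs = Suc y" by blast
  then show ?case by auto
next
  case (ev_primS f g n xs y z)
  from ev_primS.IH(1) obtain s1 where s1: "bounded_eval (Prim f g) s1 (n # xs) = Suc y" by blast
  from ev_primS.IH(2) obtain s2 where s2: "bounded_eval g s2 (n # y # xs) = Suc z" by blast
  let ?s = "max s1 s2"
  have a: "bounded_eval (Prim f g) ?s (n # xs) = Suc y" using bounded_eval_mono[OF s1] by simp
  have b: "bounded_eval g ?s (n # y # xs) = Suc z" using bounded_eval_mono[OF s2] by simp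
  show ?case by (rule exI[of _ ?s]) (use a b in simp)
next
  case (ev_mini f n xs)
  then show ?case by (intro bounded_eval_complete_Mini) blast+
qed

lemma rec_eval_deterministic: "rec_eval p xs y \<Longrightarrow> rec_eval p xs z \<Longrightarrow> y = z"
proof -
  assume a: "rec_eval p xs y" "rec_eval p xs z"
  obtain s1 where s1: "bounded_eval p s1 xs = Suc y" using bounded_eval_complete[OF a(1)] by blast
  obtain s2 where s2: "bounded_eval p s2 xs = Suc z" using bounded_eval_complete[OF a(2)] by blast
  have "bounded_eval p (max s1 s2) xs = Suc y" "bounded_eval p (max s1 s2) xs = Suc z"
    using bounded_eval_mono[OF s1, of "max s1 s2"] bounded_eval_mono[OF s2, of "max s1 s2"] by auto
  then show ?thesis by simp
qed

lemma halts_iff_bounded_eval: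
  "(\<exists>y. rec_eval p xs y) \<longleftrightarrow> (\<exists>s. bounded_eval p s xs \<noteq> 0)"
proof
  assume "\<exists>y. rec_eval p xs y"
  then obtain y where "rec_eval p xs y" by blast
  from bounded_eval_complete[OF this] obtain s where "bounded_eval p s xs = Suc y" by blast
  then show "\<exists>s. bounded_eval p s xs \<noteq> 0" by (intro exI[of _ s]) simp
next
  assume "\<exists>s. bounded_eval p s xs \<noteq> 0"
  then obtain s where "bounded_eval p s xs \<noteq> 0" by blast
  then obtain y where "bounded_eval p s xs = Suc y" using not0_implies_Suc by blast
  from bounded_eval_sound[OF this] show "\<exists>y. rec_eval p xs y" by blast
qed

lemma prim_rec_bounded_least:
  "prim_rec (\<lambda>_. 0) (\<lambda>w. if w!Suc 0 < w!0 then w!Suc 0 else if Q (w!0 # drop 2 w) then w!0 else Suc (w!0)) n v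
  = bounded_least (\<lambda>j. Q (j # v)) n"
  by (induction n) (auto simp: bounded_least.simps)

lemma computable_bounded_least:
  "decidable (Suc m) Q \<Longrightarrow> computable m N
    \<Longrightarrow> computable m (\<lambda>v. bounded_least (\<lambda>j. Q (j # v)) (N v))"
proof -
  assume Q: "decidable (Suc m) Q" and N: "computable m N"
  let ?Gs = "(\<lambda>w. w ! 0) # map (\<lambda>j xs. xs ! j) [2..<Suc (Suc m)]"
  have l: "length ?Gs = Suc m" by simp
  have Q': "decidable (length ?Gs) Q" unfolding l by (rule Q)
  have "decidable (Suc (Suc m)) (\<lambda>w. Q (map (\<lambda>g. g w) ?Gs))"
    by (rule decidable_comp[OF Q']) (auto intro: computable_nth)
  then have q: "decidable (Suc (Suc m)) (\<lambda>w. Q (w!0 # drop 2 w))"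
    unfolding decidable_def by (rule computable_cong) (simp add: map_nth_upt_drop)
  have G: "computable (Suc (Suc m)) (\<lambda>w. if w!Suc 0 < w!0 then w!Suc 0 else if Q (w!0 # drop 2 w) then w!0 else Suc (w!0))"
    by (intro computable_if decidable_less computable_nth computable_Suc q) auto
  have "computable m (\<lambda>v. prim_rec (\<lambda>_. 0) (\<lambda>w. if w!Suc 0 < w!0 then w!Suc 0 else if Q (w!0 # drop 2 w) then w!0 else Suc (w!0))
          (N v) (map (\<lambda>a. a v) (map (\<lambda>j xs. xs ! j) [0..<m])))"
    by (rule computable_prim_rec_comp[OF computable_const G N computable_projs]) simp
  then show ?thesis by (rule computable_cong) (simp add: map_nth_upt_drop prim_rec_bounded_least)
qed

lemma prim_rec_bounded_eval: "prim_rec (\<lambda>zs. bounded_eval f (hd zs) (tl zs))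
   (\<lambda>w. if w!Suc 0 = 0 then 0 else bounded_eval g (w!Suc (Suc 0)) (w!0 # (w!Suc 0 - 1) # drop 3 w)) n (s # ys)
   = rec_nat (bounded_eval f s ys) (\<lambda>i r. if r = 0 then 0 else bounded_eval g s (i # (r - 1) # ys)) n"
  by (induction n) (auto simp: numeral_3_eq_3)

lemma computable_bounded_eval_Comp:
  assumes f: "\<And>m. computable (Suc m) (\<lambda>v. bounded_eval f (hd v) (tl v))"
    and gs: "\<And>g m. g \<in> set gs
      \<Longrightarrow> computable (Suc m) (\<lambda>v. bounded_eval g (hd v) (tl v))"
  shows "computable (Suc m) (\<lambda>v. bounded_eval (Comp f gs) (hd v) (tl v))"
proof -
  let ?Hs = "map (\<lambda>g v. bounded_eval g (hd v) (tl v)) gs"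
  have H: "\<forall>h\<in>set ?Hs. computable (Suc m) h" using gs by auto
  have P: "decidable (Suc m) (\<lambda>v. prod_list (map (\<lambda>h. h v) ?Hs) = 0)"
    by (intro decidable_eq computable_prod_list H computable_const)
  let ?Gs = "hd # map (\<lambda>h v. h v - 1) ?Hs"
  have F: "computable (length ?Gs) (\<lambda>w. bounded_eval f (hd w) (tl w))" using f[of "length gs"] by simp
  have "computable (Suc m) (\<lambda>v. (\<lambda>w. bounded_eval f (hd w) (tl w)) (map (\<lambda>g. g v) ?Gs))"
    by (rule computable_comp[OF F]) (use gs in \<open>auto intro!: computable_hd computable_minus_Suc_0\<close>)
  then have E: "computable (Suc m) (\<lambda>v. bounded_eval f (hd v) (map (\<lambda>g. bounded_eval g (hd v) (tl v) - 1) gs))"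
    by (simp add: comp_def)
  have "computable (Suc m) (\<lambda>v. if prod_list (map (\<lambda>h. h v) ?Hs) = 0 then 0 else bounded_eval f (hd v) (map (\<lambda>g. bounded_eval g (hd v) (tl v) - 1) gs))"
    by (rule computable_if[OF P computable_const E])
  then show ?thesis
  proof (rule computable_cong)
    fix v :: "nat list"
    have e: "(prod_list (map (\<lambda>g. bounded_eval g (hd v) (tl v)) gs) = 0) = (\<exists>c\<in>set (map bounded_eval gs). c (hd v) (tl v) = 0)"
      by (auto simp: prod_list_zero_iff)
    show "(if prod_list (map (\<lambda>h. h v) ?Hs) = 0 then 0 else bounded_eval f (hd v) (map (\<lambda>g. bounded_eval g (hd v) (tl v) - 1) gs))
      = bounded_eval (Comp f gs) (hd v) (tl v)"
      using e by (auto simp: comp_def)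
  qed
qed

lemma computable_bounded_eval_Prim:
  assumes f: "\<And>m. computable (Suc m) (\<lambda>v. bounded_eval f (hd v) (tl v))" and g: "\<And>m. computable (Suc m) (\<lambda>v. bounded_eval g (hd v) (tl v))"
  shows "computable (Suc m) (\<lambda>v. bounded_eval (Prim f g) (hd v) (tl v))"
proof (cases m)
  case 0
  show ?thesis by (rule computable_cong[OF computable_const[of _ 0]]) (auto simp: 0 length_Suc_conv)
next
  case (Suc k)
  let ?F = "\<lambda>zs. bounded_eval f (hd zs) (tl zs)"
  let ?G = "\<lambda>w. if w!Suc 0 = 0 then 0 else bounded_eval g (w!Suc (Suc 0)) (w!0 # (w!Suc 0 - 1) # drop 3 w)"
  have F: "computable (Suc k) ?F" by (rule f)
  let ?Gs = "[\<lambda>w. w!Suc (Suc 0), \<lambda>w. w!0, \<lambda>w. w!Suc 0 - 1] @ map (\<lambda>j w. w!j) [3..<Suc (Suc (Suc k))]"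
  have lg: "length ?Gs = Suc (Suc (Suc k))" by simp
  have g: "computable (length ?Gs) (\<lambda>u. bounded_eval g (hd u) (tl u))" unfolding lg by (rule g)
  have "computable (Suc (Suc (Suc k))) (\<lambda>w. (\<lambda>u. bounded_eval g (hd u) (tl u)) (map (\<lambda>h. h w) ?Gs))"
    by (rule computable_comp[OF g]) (auto intro!: computable_intros)
  then have g2: "computable (Suc (Suc (Suc k))) (\<lambda>w. bounded_eval g (w!Suc (Suc 0)) (w!0 # (w!Suc 0 - 1) # drop 3 w))"
    by (rule computable_cong) simp
  have G: "computable (Suc (Suc (Suc k))) ?G"
    by (intro computable_if decidable_eq computable_nth computable_const g2) auto
  let ?As = "(\<lambda>v. v!0) # map (\<lambda>j v. v!j) [2..<Suc (Suc k)]"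
  have "computable (Suc (Suc k)) (\<lambda>v. prim_rec ?F ?G (v!Suc 0) (map (\<lambda>a. a v) ?As))"
    by (rule computable_prim_rec_comp[OF F G]) (auto intro!: computable_nth)
  then have "computable (Suc (Suc k)) (\<lambda>v. prim_rec ?F ?G (v!Suc 0) (v!0 # drop 2 v))"
    by (rule computable_cong) simp
  then show ?thesis unfolding Suc
  proof (rule computable_cong)
    fix v :: "nat list" assume "length v = Suc (Suc k)"
    then obtain s n ys where v: "v = s # n # ys" by (auto simp: length_Suc_conv)
    show "prim_rec ?F ?G (v!Suc 0) (v!0 # drop 2 v) = bounded_eval (Prim f g) (hd v) (tl v)"
      unfolding v by (simp add: prim_rec_bounded_eval)
  qed
qed

lemma computable_bounded_eval_Mini:
  assumes IH: "\<And>m. computable (Suc m) (\<lambda>v. bounded_eval f (hd v) (tl v))"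
  shows "computable (Suc m) (\<lambda>v. bounded_eval (Mini f) (hd v) (tl v))"
proof -
  have f: "computable (Suc (Suc m)) (\<lambda>u. bounded_eval f (hd u) (tl u))" by (rule IH)
  let ?Gs = "[\<lambda>w. w!Suc 0, \<lambda>w. w!0] @ map (\<lambda>j w. w!j) [2..<Suc (Suc m)]"
  have lg: "length ?Gs = Suc (Suc m)" by simp
  have "computable (Suc (Suc m)) (\<lambda>w. (\<lambda>u. bounded_eval f (hd u) (tl u)) (map (\<lambda>h. h w) ?Gs))"
    by (rule computable_comp) (unfold lg, rule f, auto intro!: computable_nth)
  then have f2: "computable (Suc (Suc m)) (\<lambda>w. bounded_eval f (w!Suc 0) (w!0 # drop 2 w))"
    by (rule computable_cong) simp
  have q: "decidable (Suc (Suc m)) (\<lambda>w. bounded_eval f (w!Suc 0) (w!0 # drop 2 w) \<le> 1)"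
    by (intro decidable_le f2 computable_const)
  have M: "computable (Suc m) (\<lambda>v. bounded_least (\<lambda>j. bounded_eval f ((j # v)!Suc 0) ((j # v)!0 # drop 2 (j # v)) \<le> 1) (Suc (v!0)))"
    by (rule computable_bounded_least[OF q]) (auto intro!: computable_Suc computable_nth)
  let ?M = "\<lambda>v. bounded_least (\<lambda>j. bounded_eval f ((j # v)!Suc 0) ((j # v)!0 # drop 2 (j # v)) \<le> 1) (Suc (v!0))"
  let ?Cs = "[\<lambda>v. v!0, ?M] @ map (\<lambda>j w. w!j) [1..<Suc m]"
  have lc: "length ?Cs = Suc (Suc m)" by simp
  have "computable (Suc m) (\<lambda>w. (\<lambda>u. bounded_eval f (hd u) (tl u)) (map (\<lambda>h. h w) ?Cs))"
    by (rule computable_comp) (unfold lc, rule f, use M in \<open>auto intro!: computable_nth\<close>)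
  then have C: "computable (Suc m) (\<lambda>v. bounded_eval f (v!0) (?M v # drop 1 v))"
    by (rule computable_cong) simp
  have "computable (Suc m) (\<lambda>v. if ?M v \<le> v!0 \<and> bounded_eval f (v!0) (?M v # drop 1 v) = 1 then Suc (?M v) else 0)"
    by (intro computable_if decidable_conj decidable_le decidable_eq M C computable_nth computable_const computable_Suc) auto
  then show ?thesis
  proof (rule computable_cong)
    fix v :: "nat list" assume "length v = Suc m"
    then obtain s xs where v: "v = s # xs" by (auto simp: length_Suc_conv)
    show "(if ?M v \<le> v!0 \<and> bounded_eval f (v!0) (?M v # drop 1 v) = 1 then Suc (?M v) else 0) = bounded_eval (Mini f) (hd v) (tl v)"
      unfolding v by (simp add: Let_def)
  qed
qed

theorem computable_bounded_eval: "computable (Suc m) (\<lambda>v. bounded_eval p (hd v) (tl v))"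
proof (induction p arbitrary: m)
  case Zero
  show ?case by (rule computable_cong[OF computable_const[of _ 1]]) simp
next
  case Succ
  show ?case
  proof (cases m)
    case 0
    show ?thesis by (rule computable_cong[OF computable_const[of _ 0]]) (auto simp: 0 length_Suc_conv)
  next
    case (Suc k)
    have "computable (Suc m) (\<lambda>v. Suc (Suc (v ! Suc 0)))" by (intro computable_Suc computable_nth) (simp add: Suc)
    then show ?thesis by (rule computable_cong) (auto simp: Suc length_Suc_conv)
  qed
next
  case (Proj i)
  show ?case
  proof (cases "i < m")
    case True
    have "computable (Suc m) (\<lambda>v. Suc (v ! Suc i))" by (intro computable_Suc computable_nth) (simp add: True)
    then show ?thesis by (rule computable_cong) (use True in \<open>auto simp: length_Suc_conv\<close>)
  next
    case False
    show ?thesis by (rule computable_cong[OF computable_const[of _ 0]]) (use False in \<open>auto simp: length_Suc_conv\<close>)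
  qed
next
  case (Comp f gs)
  then show ?case by (rule computable_bounded_eval_Comp)
next
  case (Prim f g)
  then show ?case by (rule computable_bounded_eval_Prim)
next
  case (Mini f)
  then show ?case by (rule computable_bounded_eval_Mini)
qed

section \<open>Recursive and recursively enumerable sets\<close>

lemma recursive_set_iff_decidable:
  "recursive_set A \<longleftrightarrow> decidable 1 (\<lambda>v. v!0 \<in> A)"
proof
  assume "recursive_set A"
  then obtain p where p: "\<forall>k. rec_eval p [k] (if k \<in> A then 1 else 0)"
    unfolding recursive_set_def by blast
  show "decidable 1 (\<lambda>v. v!0 \<in> A)" unfolding decidable_def computable_def
  proof (rule exI[of _ p], intro allI impI)
    fix xs :: "nat list" assume "length xs = 1"
    then obtain k where "xs = [k]" by (cases xs) auto
    then show "rec_eval p xs (if xs!0 \<in> A then 1 else 0)" using p by simp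
  qed
next
  assume "decidable 1 (\<lambda>v. v!0 \<in> A)"
  then obtain p where "\<forall>xs. length xs = 1 \<longrightarrow> rec_eval p xs (if xs!0 \<in> A then 1 else 0)"
    unfolding decidable_def computable_def by blast
  then show "recursive_set A" unfolding recursive_set_def
    by (intro exI[of _ p] allI) (drule spec[of _ "[_]"], simp)
qed

inductive_cases rec_eval_MiniE: "rec_eval (Mini f) xs y"

lemma re_set_if_ex_decidable:
  assumes P: "decidable 2 P" and A: "\<And>k. k \<in> A \<longleftrightarrow> (\<exists>s. P [k, s])"
  shows "re_set A"
proof -
  have "decidable 2 (\<lambda>v. P [v!1, v!0])"
    by (rule decidable_comp2[OF P]) (auto intro: computable_nth)
  then have "computable 2 (\<lambda>v. if P [v!1, v!0] then 0 else 1)"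
    by (intro computable_if computable_const)
  then obtain q where q: "\<forall>xs. length xs = 2 \<longrightarrow> rec_eval q xs (if P [xs!1, xs!0] then 0 else 1)"
    unfolding computable_def by auto
  have q2: "rec_eval q [s, k] (if P [k, s] then 0 else 1)" for s k
    using q[rule_format, of "[s, k]"] by simp
  show ?thesis unfolding re_set_def
  proof (rule exI[of _ "Mini q"], intro allI iffI)
    fix k assume "k \<in> A"
    then have ex: "\<exists>s. P [k, s]" using A by blast
    let ?n = "LEAST s. P [k, s]"
    have "rec_eval (Mini q) [k] ?n"
    proof (rule ev_mini)
      show "rec_eval q [?n, k] 0" using q2[of ?n k] LeastI_ex[OF ex] by simp
      show "\<forall>m<?n. \<exists>y. rec_eval q [m, k] y \<and> 0 < y"
      proof (intro allI impI)
        fix m assume "m < ?n"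
        then have "\<not> P [k, m]" by (rule not_less_Least)
        then show "\<exists>y. rec_eval q [m, k] y \<and> 0 < y" using q2[of m k] by auto
      qed
    qed
    then show "\<exists>y. rec_eval (Mini q) [k] y" by blast
  next
    fix k assume "\<exists>y. rec_eval (Mini q) [k] y"
    then obtain y where "rec_eval (Mini q) [k] y" by blast
    then have "rec_eval q [y, k] 0" by (rule rec_eval_MiniE) simp
    then have "(if P [k, y] then 0 else 1) = (0::nat)" by (rule rec_eval_deterministic[OF q2])
    then have "P [k, y]" by (simp split: if_splits)
    then show "k \<in> A" using A by blast
  qed
qed

lemma ex_decidable_if_re_set:
  assumes "re_set A"
  shows "\<exists>P. decidable 2 P \<and> (\<forall>k. k \<in> A
    \<longleftrightarrow> (\<exists>s. P [k, s]))"
proof -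
  obtain p where p: "\<forall>k. k \<in> A \<longleftrightarrow> (\<exists>y. rec_eval p [k] y)"
    using assms unfolding re_set_def by blast
  have "computable 2 (\<lambda>v. (\<lambda>v. bounded_eval p (hd v) (tl v)) [v!1, v!0])"
    by (rule computable_comp2[OF computable_bounded_eval[of "Suc 0" p]]) (auto intro: computable_nth)
  then have "decidable 2 (\<lambda>v. bounded_eval p (v!1) [v!0] \<noteq> 0)"
    by (intro decidable_not decidable_eq computable_const) simp
  moreover have "\<forall>k. k \<in> A
    \<longleftrightarrow> (\<exists>s. bounded_eval p ([k, s]!1) [[k, s]!0] \<noteq> 0)"
    using p halts_iff_bounded_eval by simp
  ultimately show ?thesis by (intro exI conjI)
qed

lemma re_set_iff_ex_decidable:
  "re_set A \<longleftrightarrow> (\<exists>P. decidable 2 P \<and> (\<forall>k. k \<in> A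
    \<longleftrightarrow> (\<exists>s. P [k, s])))"
proof
  assume "\<exists>P. decidable 2 P \<and> (\<forall>k. k \<in> A
    \<longleftrightarrow> (\<exists>s. P [k, s]))"
  then obtain P where "decidable 2 P" and "\<forall>k. k \<in> A
    \<longleftrightarrow> (\<exists>s. P [k, s])" by blast
  then show "re_set A" by (intro re_set_if_ex_decidable) auto
qed (rule ex_decidable_if_re_set)

lemma re_set_Un:
  assumes "re_set A" and "re_set B"
  shows "re_set (A \<union> B)"
proof -
  obtain P where P: "decidable 2 P" and PA: "\<forall>k. k \<in> A
    \<longleftrightarrow> (\<exists>s. P [k, s])"
    using assms(1) unfolding re_set_iff_ex_decidable by blast
  obtain Q where Q: "decidable 2 Q" and QB: "\<forall>k. k \<in> B
    \<longleftrightarrow> (\<exists>s. Q [k, s])"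
    using assms(2) unfolding re_set_iff_ex_decidable by blast
  show ?thesis
    by (rule re_set_if_ex_decidable[OF decidable_disj[OF P Q]]) (simp add: PA QB ex_disj_distrib)
qed

lemma re_set_vimage:
  assumes "re_set A" and f: "computable 1 (\<lambda>v. f (v!0))"
  shows "re_set (f -` A)"
proof -
  obtain P where P: "decidable 2 P" and A: "\<forall>k. k \<in> A
    \<longleftrightarrow> (\<exists>s. P [k, s])"
    using assms(1) unfolding re_set_iff_ex_decidable by blast
  have "decidable 2 (\<lambda>v. P [f (v!0), v!1])"
    by (rule decidable_comp2[OF P computable_comp_unary[OF f[unfolded One_nat_def]]]) (auto intro: computable_nth)
  then show ?thesis by (rule re_set_if_ex_decidable) (simp add: A)
qed

lemma re_set_if_decidable:
  assumes "decidable 1 (\<lambda>v. v!0 \<in> A)"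
  shows "re_set A"
proof -
  have "decidable 2 (\<lambda>v. [v!0]!0 \<in> A)" by (rule decidable_comp1[OF assms computable_nth]) simp
  then show ?thesis by (rule re_set_if_ex_decidable) simp
qed

text \<open>Post's theorem. The characteristic function searches for the least step bound
  at which a witness for membership in A or in its complement appears.\<close>

theorem recursive_set_if_re_set_complement:
  assumes "re_set A" and "re_set (- A)"
  shows "recursive_set A"
proof -
  obtain P where P: "decidable 2 P" and PA: "\<forall>k. k \<in> A
    \<longleftrightarrow> (\<exists>s. P [k, s])"
    using assms(1) unfolding re_set_iff_ex_decidable by blast
  obtain Q where Q: "decidable 2 Q" and QA: "\<forall>k. k \<in> - A
    \<longleftrightarrow> (\<exists>s. Q [k, s])"
    using assms(2) unfolding re_set_iff_ex_decidable by blast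
  let ?F = "\<lambda>v. if P [v!1, v!0] \<or> Q [v!1, v!0] then 0 else 1 :: nat"
  have "decidable 2 (\<lambda>v. P [v!1, v!0])" "decidable 2 (\<lambda>v. Q [v!1, v!0])"
    by (rule decidable_comp2[OF P] decidable_comp2[OF Q], auto intro: computable_nth)+
  then have "computable 2 ?F" by (intro computable_if decidable_disj computable_const)
  then have F: "computable (Suc 1) ?F" by (simp add: numeral_2_eq_2)
  have ex: "\<exists>s. ?F (s # ys) = 0" if len: "length ys = 1" for ys
  proof -
    obtain k where ys: "ys = [k]" using len by (cases ys) auto
    have "\<exists>s. P [k, s] \<or> Q [k, s]" using PA QA by (cases "k \<in> A") auto
    then show ?thesis using ys by simp
  qed
  define M where "M = (\<lambda>ys. LEAST s. ?F (s # ys) = 0)"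
  have M: "computable 1 M" unfolding M_def by (rule computable_Least[OF F ex])
  have "P [k, M [k]] \<or> Q [k, M [k]]" for k
  proof -
    have "?F (M [k] # [k]) = 0" unfolding M_def by (rule LeastI_ex[OF ex]) simp
    then show ?thesis by (simp split: if_splits)
  qed
  then have PM: "P [k, M [k]] \<longleftrightarrow> k \<in> A" for k using PA QA by blast
  have "decidable 1 (\<lambda>v. P [v!0, M v])"
    by (rule decidable_comp2[OF P computable_nth M]) simp
  then show ?thesis
    unfolding recursive_set_iff_decidable by (rule decidable_cong) (auto simp: length_Suc_conv PM)
qed

section \<open>Codes of lists\<close>

text \<open>Lists are coded by the bijection list_encode of HOL-Library, under which
  list_encode (x # xs) = Suc (prod_encode (x, list_encode xs)).\<close>

definition hd_code :: "nat \<Rightarrow> nat" where "hd_code l = fst (prod_decode (l - 1))"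
definition tl_code :: "nat \<Rightarrow> nat" where "tl_code l = snd (prod_decode (l - 1))"
definition cons_code :: "nat \<Rightarrow> nat \<Rightarrow> nat" where "cons_code a l = Suc (prod_encode (a, l))"

lemma prod_decode_0[simp]: "prod_decode 0 = (0, 0)"
  by (simp add: prod_decode_def prod_decode_aux.simps)

lemma hd_code_list_encode[simp]: "hd_code (list_encode (x # xs)) = x" by (simp add: hd_code_def)
lemma hd_code_Suc[simp]: "hd_code (Suc (prod_encode (x, y))) = x" by (simp add: hd_code_def)
lemma tl_code_list_encode[simp]: "tl_code (list_encode xs) = list_encode (tl xs)"
  by (cases xs) (simp_all add: tl_code_def)
lemma cons_code_list_encode[simp]:
  "cons_code x (list_encode xs) = list_encode (x # xs)" by (simp add: cons_code_def)

lemma computable_hd_code[computable_intros]: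
  "computable m f \<Longrightarrow> computable m (\<lambda>v. hd_code (f v))" unfolding hd_code_def by (intro computable_intros)
lemma computable_tl_code[computable_intros]:
  "computable m f \<Longrightarrow> computable m (\<lambda>v. tl_code (f v))" unfolding tl_code_def by (intro computable_intros)
lemma computable_cons_code[computable_intros]:
  "computable m f \<Longrightarrow> computable m g
    \<Longrightarrow> computable m (\<lambda>v. cons_code (f v) (g v))" unfolding cons_code_def by (intro computable_intros)

lemma length_list_decode_le: "length (list_decode l) \<le> l"
proof (induction l rule: list_decode.induct)
  case 1 then show ?case by simp
next
  case (2 n)
  obtain x y where xy: "prod_decode n = (x, y)" by (cases "prod_decode n")
  then have "y \<le> n" by (metis le_prod_encode_2 prod_decode_inverse)
  then show ?case using 2 xy by simp
qed

lemma computable_replace_args: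
  "computable (length As + m) G \<Longrightarrow> \<forall>a\<in>set As. computable (k + m) a
    \<Longrightarrow>
  computable (k + m) (\<lambda>w. G (map (\<lambda>a. a w) As @ drop k w))"
proof -
  assume G: "computable (length As + m) G" and A: "\<forall>a\<in>set As. computable (k + m) a"
  let ?Gs = "As @ map (\<lambda>j w. w ! j) [k..<k+m]"
  have l: "length ?Gs = length As + m" by simp
  have "computable (k + m) (\<lambda>w. G (map (\<lambda>g. g w) ?Gs))"
    by (rule computable_comp) (unfold l, rule G, use A in \<open>auto intro: computable_nth\<close>)
  then show ?thesis by (rule computable_cong) simp
qed

lemma computable_drop: "computable m L \<Longrightarrow> computable (k + m) (\<lambda>w. L (drop k w))"
  using computable_replace_args[of "[]" m L k] by simp

lemma prim_rec_tl_code_pow: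
  "prim_rec (\<lambda>ys. ys!0) (\<lambda>w. tl_code (w!Suc 0)) n [l] = (tl_code ^^ n) l"
  by (induction n) auto

lemma computable_tl_code_pow[computable_intros]:
  "computable m I \<Longrightarrow> computable m L
    \<Longrightarrow> computable m (\<lambda>v. (tl_code ^^ I v) (L v))"
proof -
  assume I: "computable m I" and L: "computable m L"
  have "computable m (\<lambda>v. prim_rec (\<lambda>ys. ys!0) (\<lambda>w. tl_code (w!Suc 0)) (I v) (map (\<lambda>a. a v) [L]))"
    by (rule computable_prim_rec_comp) (use I L in \<open>auto intro!: computable_intros\<close>)
  then show ?thesis by (simp add: prim_rec_tl_code_pow)
qed

lemma tl_code_pow_list_encode: "(tl_code ^^ i) (list_encode xs) = list_encode (drop i xs)"
  by (induction i) (auto simp: drop_Suc tl_drop)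

definition nth_code :: "nat \<Rightarrow> nat \<Rightarrow> nat" where "nth_code l i = hd_code ((tl_code ^^ i) l)"

lemma nth_code_list_encode: "nth_code (list_encode xs) i = (if i < length xs then xs ! i else 0)"
  unfolding nth_code_def tl_code_pow_list_encode
  by (cases "i < length xs") (auto simp: Cons_nth_drop_Suc[symmetric] hd_code_def)

lemma computable_nth_code[computable_intros]:
  "computable m L \<Longrightarrow> computable m I
    \<Longrightarrow> computable m (\<lambda>v. nth_code (L v) (I v))"
  unfolding nth_code_def by (intro computable_intros)

text \<open>Folding over the first i entries of the coded list l. A code bounds the length of
  the list it codes, so i = l folds over the whole list.\<close>

primrec foldl_code_upto :: "(nat list \<Rightarrow> nat) \<Rightarrow> nat \<Rightarrow> nat \<Rightarrow> nat list \<Rightarrow> nat \<Rightarrow> nat" where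
  "foldl_code_upto G a l v 0 = a"
| "foldl_code_upto G a l v (Suc i) = (if (tl_code ^^ i) l = 0 then foldl_code_upto G a l v i
     else G (hd_code ((tl_code ^^ i) l) # foldl_code_upto G a l v i # v))"

lemma foldl_code_upto_take:
  "foldl_code_upto G a (list_encode xs) v i = foldl (\<lambda>acc x. G (x # acc # v)) a (take i xs)"
proof (induction i)
  case 0 then show ?case by simp
next
  case (Suc i)
  show ?case
  proof (cases "i < length xs")
    case True
    then have "drop i xs \<noteq> []" by simp
    then have "list_encode (drop i xs) \<noteq> 0" by (cases "drop i xs") auto
    moreover have "hd_code (list_encode (drop i xs)) = xs ! i" using True by (simp add: Cons_nth_drop_Suc[symmetric])
    ultimately show ?thesis using Suc True by (simp add: tl_code_pow_list_encode take_Suc_conv_app_nth)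
  next
    case False
    then show ?thesis using Suc by (simp add: tl_code_pow_list_encode)
  qed
qed

lemma prim_rec_foldl_code_upto:
  "prim_rec A' (\<lambda>w. if (tl_code ^^ (w!0)) (L (drop 2 w)) = 0 then w!Suc 0
     else G (hd_code ((tl_code ^^ (w!0)) (L (drop 2 w))) # w!Suc 0 # drop 2 w)) n v = foldl_code_upto G (A' v) (L v) v n"
  by (induction n) simp_all

lemma computable_foldl_code:
  "computable (Suc (Suc m)) G \<Longrightarrow> computable m L \<Longrightarrow> computable m A
    \<Longrightarrow>
  computable m (\<lambda>v. foldl (\<lambda>acc a. G (a # acc # v)) (A v) (list_decode (L v)))"
proof -
  assume G: "computable (Suc (Suc m)) G" and L: "computable m L" and A: "computable m A"
  have L2: "computable (Suc (Suc m)) (\<lambda>w. L (drop 2 w))" using computable_drop[OF L, of 2] by simp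
  have h1: "computable (Suc (Suc m)) (\<lambda>w. hd_code ((tl_code ^^ (w!0)) (L (drop 2 w))))"
    by (intro computable_hd_code computable_tl_code_pow L2 computable_nth) simp
  have h2: "computable (Suc (Suc m)) (\<lambda>w. (tl_code ^^ (w!0)) (L (drop 2 w)))"
    by (intro computable_tl_code_pow L2 computable_nth) simp
  have a: "\<forall>a\<in>set [\<lambda>w. hd_code ((tl_code ^^ (w!0)) (L (drop 2 w))), \<lambda>w. w!Suc 0]. computable (2 + m) a"
    using h1 by (auto intro: computable_nth)
  have G': "computable (length [\<lambda>w. hd_code ((tl_code ^^ (w!0)) (L (drop 2 w))), \<lambda>w. w!Suc 0] + m) G" using G by simp
  have "computable (2 + m) (\<lambda>w. G (map (\<lambda>a. a w) [\<lambda>w. hd_code ((tl_code ^^ (w!0)) (L (drop 2 w))), \<lambda>w. w!Suc 0] @ drop 2 w))"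
    by (rule computable_replace_args[OF G' a])
  then have G2: "computable (Suc (Suc m)) (\<lambda>w. G (hd_code ((tl_code ^^ (w!0)) (L (drop 2 w))) # w!Suc 0 # drop 2 w))"
    by simp
  have S: "computable (Suc (Suc m)) (\<lambda>w. if (tl_code ^^ (w!0)) (L (drop 2 w)) = 0 then w!Suc 0
     else G (hd_code ((tl_code ^^ (w!0)) (L (drop 2 w))) # w!Suc 0 # drop 2 w))"
    by (intro computable_if decidable_eq h2 computable_const computable_nth G2) simp
  have "computable m (\<lambda>v. prim_rec A (\<lambda>w. if (tl_code ^^ (w!0)) (L (drop 2 w)) = 0 then w!Suc 0
     else G (hd_code ((tl_code ^^ (w!0)) (L (drop 2 w))) # w!Suc 0 # drop 2 w)) (L v) (map (\<lambda>a. a v) (map (\<lambda>j v. v!j) [0..<m])))"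
    by (rule computable_prim_rec_comp[OF A S L computable_projs]) simp
  then have "computable m (\<lambda>v. foldl_code_upto G (A v) (L v) v (L v))"
    by (rule computable_cong) (simp add: prim_rec_foldl_code_upto)
  then show ?thesis
  proof (rule computable_cong)
    fix v :: "nat list"
    have "foldl_code_upto G (A v) (L v) v (L v) = foldl_code_upto G (A v) (list_encode (list_decode (L v))) v (L v)" by (simp only: list_decode_inverse)
    also have "\<dots> = foldl (\<lambda>acc x. G (x # acc # v)) (A v) (take (L v) (list_decode (L v)))"
      by (rule foldl_code_upto_take)
    also have "\<dots> = foldl (\<lambda>acc x. G (x # acc # v)) (A v) (list_decode (L v))"
      using length_list_decode_le[of "L v"] by simp
    finally show "foldl_code_upto G (A v) (L v) v (L v) = foldl (\<lambda>acc a. G (a # acc # v)) (A v) (list_decode (L v))" .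
  qed
qed

lemma computable_foldl_code_cong:
  "computable (Suc (Suc m)) G \<Longrightarrow> computable m L \<Longrightarrow> computable m A
    \<Longrightarrow>
  (\<And>v. length v = m
    \<Longrightarrow> foldl (\<lambda>acc a. G (a # acc # v)) (A v) (list_decode (L v)) = H v)
    \<Longrightarrow> computable m H"
  using computable_foldl_code computable_cong by blast

lemma computable_skip_nth1:
  "computable (Suc m) F \<Longrightarrow> computable (Suc (Suc m)) (\<lambda>w. F (w!0 # drop 2 w))"
proof -
  assume F: "computable (Suc m) F"
  have F': "computable (length [\<lambda>w. w!0] + m) F" using F by simp
  have "computable (2 + m) (\<lambda>w. F (map (\<lambda>a. a w) [\<lambda>w. w!0] @ drop 2 w))"
    by (rule computable_replace_args[OF F']) (auto intro: computable_nth)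
  then show ?thesis by simp
qed

lemma foldl_Suc_acc: "foldl (\<lambda>acc a. Suc acc) n xs = n + length xs"
  by (induction xs arbitrary: n) auto

lemma computable_length_code[computable_intros]:
  "computable m L \<Longrightarrow> computable m (\<lambda>v. length (list_decode (L v)))"
  by (rule computable_foldl_code_cong[where G="\<lambda>w. Suc (w!Suc 0)" and A="\<lambda>_. 0"]) (auto intro!: computable_intros simp: foldl_Suc_acc)

lemma foldl_cons_code:
  "foldl (\<lambda>acc a. cons_code (f a) acc) (list_encode ys) xs = list_encode (rev (map f xs) @ ys)"
proof (induction xs arbitrary: ys)
  case Nil then show ?case by simp
next
  case (Cons a xs)
  have "cons_code (f a) (list_encode ys) = list_encode (f a # ys)" by (rule cons_code_list_encode)
  then show ?case by (simp only: foldl_Cons Cons.IH) simp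
qed

lemma foldl_cons_code_0: "foldl (\<lambda>acc a. cons_code a acc) 0 xs = list_encode (rev xs)"
  using foldl_cons_code[of id "[]" xs] by simp

lemma foldl_cons_code_list:
  "foldl (\<lambda>acc a. cons_code a acc) (list_encode ys) xs = list_encode (rev xs @ ys)"
  using foldl_cons_code[of id ys xs] by simp

lemma computable_rev_code[computable_intros]:
  "computable m L \<Longrightarrow> computable m (\<lambda>v. list_encode (rev (list_decode (L v))))"
  by (rule computable_foldl_code_cong[where G="\<lambda>w. cons_code (w!0) (w!Suc 0)" and A="\<lambda>_. 0"])
     (auto intro!: computable_intros simp: foldl_cons_code_0)

lemma computable_map_code:
  "computable (Suc m) F \<Longrightarrow> computable m L
    \<Longrightarrow> computable m (\<lambda>v. list_encode (map (\<lambda>a. F (a # v)) (list_decode (L v))))"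
proof -
  assume F: "computable (Suc m) F" and L: "computable m L"
  have G: "computable (Suc (Suc m)) (\<lambda>w. cons_code (F (w!0 # drop 2 w)) (w!Suc 0))"
    by (intro computable_cons_code computable_skip_nth1[OF F] computable_nth) simp
  have "computable m (\<lambda>v. foldl (\<lambda>acc a. cons_code (F (a # v)) acc) (list_encode []) (list_decode (L v)))"
    using computable_foldl_code[OF G L computable_const[of m 0]] by simp
  then have "computable m (\<lambda>v. list_encode (rev (map (\<lambda>a. F (a # v)) (list_decode (L v)))))"
    by (simp only: foldl_cons_code) simp
  from computable_rev_code[OF this] show ?thesis by (simp add: rev_map)
qed

lemma computable_list_append_code[computable_intros]:
  "computable m A \<Longrightarrow> computable m B
    \<Longrightarrow> computable m (\<lambda>v. list_encode (list_decode (A v) @ list_decode (B v)))"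
proof -
  assume A: "computable m A" and B: "computable m B"
  have G: "computable (Suc (Suc m)) (\<lambda>w. cons_code (w!0) (w!Suc 0))" by (intro computable_intros) auto
  have "computable m (\<lambda>v. foldl (\<lambda>acc a. cons_code a acc) (list_encode (list_decode (B v)))
     (list_decode (list_encode (rev (list_decode (A v))))))"
    using computable_foldl_code[OF G computable_rev_code[OF A] B] by simp
  then show ?thesis by (simp only: foldl_cons_code_list list_encode_inverse) simp
qed

lemma foldl_append_code:
  "foldl (\<lambda>acc a. list_encode (list_decode acc @ list_decode a)) (list_encode ys) xs
  = list_encode (ys @ concat (map list_decode xs))"
  by (induction xs arbitrary: ys) auto

lemma computable_concat_code:
  "computable m L \<Longrightarrow> computable m (\<lambda>v. list_encode (concat (map list_decode (list_decode (L v)))))"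
proof -
  assume L: "computable m L"
  have G: "computable (Suc (Suc m)) (\<lambda>w. list_encode (list_decode (w!Suc 0) @ list_decode (w!0)))"
    by (intro computable_list_append_code computable_nth) auto
  have "computable m (\<lambda>v. foldl (\<lambda>acc a. list_encode (list_decode acc @ list_decode a)) (list_encode []) (list_decode (L v)))"
    using computable_foldl_code[OF G L computable_const[of m 0]] by simp
  then show ?thesis by (simp only: foldl_append_code) simp
qed

lemma prim_rec_tabulate:
  "prim_rec (\<lambda>_. 0) (\<lambda>w. cons_code (F (w!0 # drop 2 w)) (w!Suc 0)) n v = list_encode (rev (map (\<lambda>i. F (i # v)) [0..<n]))"
  by (induction n) (simp_all add: upt_Suc)

lemma computable_map_upt_code:
  "computable (Suc m) F \<Longrightarrow> computable m N
    \<Longrightarrow> computable m (\<lambda>v. list_encode (map (\<lambda>i. F (i # v)) [0..<N v]))"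
proof -
  assume F: "computable (Suc m) F" and N: "computable m N"
  have G: "computable (Suc (Suc m)) (\<lambda>w. cons_code (F (w!0 # drop 2 w)) (w!Suc 0))"
    by (intro computable_cons_code computable_skip_nth1[OF F] computable_nth) simp
  have "computable m (\<lambda>v. prim_rec (\<lambda>_. 0) (\<lambda>w. cons_code (F (w!0 # drop 2 w)) (w!Suc 0)) (N v) (map (\<lambda>a. a v) (map (\<lambda>j v. v!j) [0..<m])))"
    by (rule computable_prim_rec_comp[OF computable_const G N computable_projs]) simp
  then have "computable m (\<lambda>v. list_encode (rev (map (\<lambda>i. F (i # v)) [0..<N v])))"
    by (rule computable_cong) (simp add: prim_rec_tabulate)
  from computable_rev_code[OF this] show ?thesis by simp
qed

lemma foldl_add_acc: "foldl (\<lambda>acc a. acc + f a) n xs = n + sum_list (map f xs)"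
  by (induction xs arbitrary: n) (auto simp: add.assoc)

lemma computable_sum_list_code:
  "computable (Suc m) F \<Longrightarrow> computable m L
    \<Longrightarrow> computable m (\<lambda>v. sum_list (map (\<lambda>a. F (a # v)) (list_decode (L v))))"
proof -
  assume F: "computable (Suc m) F" and L: "computable m L"
  have G: "computable (Suc (Suc m)) (\<lambda>w. w!Suc 0 + F (w!0 # drop 2 w))"
    by (intro computable_add computable_skip_nth1[OF F] computable_nth) simp
  have "computable m (\<lambda>v. foldl (\<lambda>acc a. acc + F (a # v)) 0 (list_decode (L v)))"
    using computable_foldl_code[OF G L computable_const[of m 0]] by simp
  then show ?thesis by (simp only: foldl_add_acc) simp
qed

lemma foldl_mult_acc: "foldl (\<lambda>acc a. acc * f a) n xs = n * prod_list (map f xs)"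
  by (induction xs arbitrary: n) (auto simp: mult.assoc)

lemma prod_list_indicator:
  "prod_list (map (\<lambda>a. if P a then 1 else 0) xs) = (if \<forall>a\<in>set xs. P a then 1 else (0::nat))"
  by (induction xs) auto

lemma decidable_ball_code:
  "decidable (Suc m) P \<Longrightarrow> computable m L
    \<Longrightarrow> decidable m (\<lambda>v. \<forall>a\<in>set (list_decode (L v)). P (a # v))"
proof -
  assume P: "decidable (Suc m) P" and L: "computable m L"
  have G: "computable (Suc (Suc m)) (\<lambda>w. w!Suc 0 * (if P (w!0 # drop 2 w) then 1 else 0))"
    using computable_skip_nth1[OF P[unfolded decidable_def]] by (intro computable_mult computable_nth) auto
  have "computable m (\<lambda>v. foldl (\<lambda>acc a. acc * (if P (a # v) then 1 else 0)) 1 (list_decode (L v)))"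
    using computable_foldl_code[OF G L computable_const[of m 1]] by simp
  then have "computable m (\<lambda>v. prod_list (map (\<lambda>a. if P (a # v) then 1 else 0) (list_decode (L v))))"
    by (simp only: foldl_mult_acc) simp
  then show ?thesis unfolding decidable_def
  proof (rule computable_cong)
    fix v :: "nat list"
    show "prod_list (map (\<lambda>a. if P (a # v) then 1 else (0::nat)) (list_decode (L v))) =
      (if \<forall>a\<in>set (list_decode (L v)). P (a # v) then 1 else 0)"
      using prod_list_indicator[where P="\<lambda>a. P (a # v)" and xs="list_decode (L v)"] by simp
  qed
qed

lemma prim_rec_sum:
  "prim_rec (\<lambda>_. 0) (\<lambda>w. w!Suc 0 + F (w!0 # drop 2 w)) n v = (\<Sum>i<n. F (i # v))"
  by (induction n) simp_all

lemma computable_sum_lessThan: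
  "computable (Suc m) F \<Longrightarrow> computable m N
    \<Longrightarrow> computable m (\<lambda>v. \<Sum>i<N v. F (i # v))"
proof -
  assume F: "computable (Suc m) F" and N: "computable m N"
  have G: "computable (Suc (Suc m)) (\<lambda>w. w!Suc 0 + F (w!0 # drop 2 w))"
    by (intro computable_add computable_skip_nth1[OF F] computable_nth) simp
  have "computable m (\<lambda>v. prim_rec (\<lambda>_. 0) (\<lambda>w. w!Suc 0 + F (w!0 # drop 2 w)) (N v) (map (\<lambda>a. a v) (map (\<lambda>j v. v!j) [0..<m])))"
    by (rule computable_prim_rec_comp[OF computable_const G N computable_projs]) simp
  then show ?thesis by (rule computable_cong) (simp add: prim_rec_sum)
qed

lemma prim_rec_prod:
  "prim_rec (\<lambda>_. Suc 0) (\<lambda>w. w!Suc 0 * F (w!0 # drop 2 w)) n v = (\<Prod>i<n. F (i # v))"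
  by (induction n) (simp_all add: mult.commute)

lemma computable_prod_lessThan:
  "computable (Suc m) F \<Longrightarrow> computable m N
    \<Longrightarrow> computable m (\<lambda>v. \<Prod>i<N v. F (i # v))"
proof -
  assume F: "computable (Suc m) F" and N: "computable m N"
  have G: "computable (Suc (Suc m)) (\<lambda>w. w!Suc 0 * F (w!0 # drop 2 w))"
    by (intro computable_mult computable_skip_nth1[OF F] computable_nth) simp
  have "computable m (\<lambda>v. prim_rec (\<lambda>_. Suc 0) (\<lambda>w. w!Suc 0 * F (w!0 # drop 2 w)) (N v) (map (\<lambda>a. a v) (map (\<lambda>j v. v!j) [0..<m])))"
    by (rule computable_prim_rec_comp[OF computable_const G N computable_projs]) simp
  then show ?thesis by (rule computable_cong) (simp add: prim_rec_prod)
qed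

lemma computable_tl_args: "computable m X \<Longrightarrow> computable (Suc m) (\<lambda>w. X (tl w))"
  using computable_drop[of m X 1] by (simp add: drop_Suc)

lemma computable_tl_tl_args:
  "computable m X \<Longrightarrow> computable (Suc (Suc m)) (\<lambda>w. X (tl (tl w)))"
  using computable_drop[of m X 2] by (simp add: drop_Suc numeral_2_eq_2)

lemma computable_map_upt_code':
  "computable (Suc m) F \<Longrightarrow> computable m N \<Longrightarrow> (\<And>v i. length v = m
    \<Longrightarrow> F (i # v) = H i v) \<Longrightarrow>
  computable m (\<lambda>v. list_encode (map (\<lambda>i. H i v) [0..<N v]))"
  by (rule computable_cong[OF computable_map_upt_code]) auto

lemma computable_map_code':
  "computable (Suc m) F \<Longrightarrow> computable m L \<Longrightarrow> (\<And>v a. length v = m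
    \<Longrightarrow> F (a # v) = H a v) \<Longrightarrow>
  computable m (\<lambda>v. list_encode (map (\<lambda>a. H a v) (list_decode (L v))))"
  by (rule computable_cong[OF computable_map_code]) auto

lemma computable_sum_list_code':
  "computable (Suc m) F \<Longrightarrow> computable m L \<Longrightarrow> (\<And>v a. length v = m
    \<Longrightarrow> F (a # v) = H a v) \<Longrightarrow>
  computable m (\<lambda>v. sum_list (map (\<lambda>a. H a v) (list_decode (L v))))"
  by (rule computable_cong[OF computable_sum_list_code]) auto

lemma computable_sum_lessThan':
  "computable (Suc m) F \<Longrightarrow> computable m N \<Longrightarrow> (\<And>v i. length v = m
    \<Longrightarrow> F (i # v) = H i v) \<Longrightarrow>
  computable m (\<lambda>v. \<Sum>i<N v. H i v)"
  by (rule computable_cong[OF computable_sum_lessThan]) auto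

lemma computable_prod_lessThan':
  "computable (Suc m) F \<Longrightarrow> computable m N \<Longrightarrow> (\<And>v i. length v = m
    \<Longrightarrow> F (i # v) = H i v) \<Longrightarrow>
  computable m (\<lambda>v. \<Prod>i<N v. H i v)"
  by (rule computable_cong[OF computable_prod_lessThan]) auto

lemma computable_foldl_code':
  "computable (Suc (Suc m)) G \<Longrightarrow> computable m L \<Longrightarrow> computable m A
    \<Longrightarrow>
  (\<And>v a acc. length v = m \<Longrightarrow> G (a # acc # v) = H a acc v) \<Longrightarrow>
  computable m (\<lambda>v. foldl (\<lambda>acc a. H a acc v) (A v) (list_decode (L v)))"
proof -
  assume G: "computable (Suc (Suc m)) G" and L: "computable m L" and A: "computable m A"
    and H: "\<And>v a acc. length v = m \<Longrightarrow> G (a # acc # v) = H a acc v"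
  have "computable m (\<lambda>v. foldl (\<lambda>acc a. G (a # acc # v)) (A v) (list_decode (L v)))" by (rule computable_foldl_code[OF G L A])
  then show ?thesis by (rule computable_cong) (rule foldl_cong, auto simp: H)
qed

lemma decidable_ball_code':
  "decidable (Suc m) P \<Longrightarrow> computable m L \<Longrightarrow> (\<And>v a. length v = m
    \<Longrightarrow> P (a # v) = Q a v) \<Longrightarrow>
  decidable m (\<lambda>v. \<forall>a\<in>set (list_decode (L v)). Q a v)"
  unfolding decidable_def by (rule computable_cong[OF decidable_ball_code[unfolded decidable_def]]) auto

section \<open>Integer codes\<close>

text \<open>Under int_encode, an integer z \<ge> 0 has the code 2z and z < 0 the code 2|z| - 1, so the
  parity of a code is the sign and the absolute value is recovered by halving.\<close>

definition int_code_abs :: "nat \<Rightarrow> nat" where "int_code_abs z = (if even z then z div 2 else Suc (z div 2))"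
definition int_code_of_sign :: "bool \<Rightarrow> nat \<Rightarrow> nat" where "int_code_of_sign neg m = (if neg \<and> m > 0 then 2 * m - 1 else 2 * m)"

lemma int_decode_via_abs: "int_decode z = (if odd z then - int (int_code_abs z) else int (int_code_abs z))"
  by (simp add: int_decode_def sum_decode_def int_code_abs_def)

lemma int_code_of_sign_eq: "int_code_of_sign neg m = int_encode (if neg then - int m else int m)"
  by (cases m) (auto simp: int_code_of_sign_def int_encode_def sum_encode_def)

lemma computable_int_code_abs[computable_intros]:
  "computable m f \<Longrightarrow> computable m (\<lambda>v. int_code_abs (f v))" unfolding int_code_abs_def by (intro computable_intros)
lemma computable_int_code_of_sign[computable_intros]:
  "decidable m P \<Longrightarrow> computable m f
    \<Longrightarrow> computable m (\<lambda>v. int_code_of_sign (P v) (f v))" unfolding int_code_of_sign_def by (intro computable_intros)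

lemma int_encode_mult_decode:
  "int_encode (int_decode a * int_decode b) = int_code_of_sign (odd a \<noteq> odd b) (int_code_abs a * int_code_abs b)"
  unfolding int_code_of_sign_eq int_decode_via_abs by auto

lemma int_encode_uminus_decode: "int_encode (- int_decode a) = int_code_of_sign (even a) (int_code_abs a)"
  unfolding int_code_of_sign_eq int_decode_via_abs by auto

lemma decidable_iff[computable_intros]:
  "decidable m P \<Longrightarrow> decidable m Q \<Longrightarrow> decidable m (\<lambda>xs. P xs = Q xs)"
proof -
  assume "decidable m P" "decidable m Q"
  then have "decidable m (\<lambda>xs. (if P xs then 1 else 0) = (if Q xs then 1 else (0::nat)))"
    unfolding decidable_def[of m P] decidable_def[of m Q] by (rule decidable_eq)
  then show ?thesis by (rule decidable_cong) simp
qed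

lemma computable_int_mult_code[computable_intros]:
  "computable m f \<Longrightarrow> computable m g
    \<Longrightarrow> computable m (\<lambda>v. int_encode (int_decode (f v) * int_decode (g v)))"
  unfolding int_encode_mult_decode by (intro computable_intros) auto

lemma computable_int_uminus_code[computable_intros]:
  "computable m f \<Longrightarrow> computable m (\<lambda>v. int_encode (- int_decode (f v)))"
  unfolding int_encode_uminus_decode by (intro computable_intros)

lemma computable_int_of_nat_code[computable_intros]:
  "computable m f \<Longrightarrow> computable m (\<lambda>v. int_encode (int (f v)))"
proof -
  assume "computable m f"
  then have "computable m (\<lambda>v. 2 * f v)" by (intro computable_intros)
  then show ?thesis by (simp add: int_encode_def sum_encode_def)
qed

section \<open>Integer polynomials\<close>

definition ipoly_wf :: "nat \<Rightarrow> ipoly \<Rightarrow> bool" where "ipoly_wf N P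
  \<longleftrightarrow> (\<forall>m\<in>set P. length (snd m) = N)"

definition monom_eval :: "int \<times> nat list \<Rightarrow> rat list \<Rightarrow> rat" where
  "monom_eval m xs = of_int (fst m) * (\<Prod>i<length xs. (xs ! i) ^ (snd m ! i))"

lemma ipoly_eval_sum_monom: "ipoly_eval P xs = sum_list (map (\<lambda>m. monom_eval m xs) P)"
  unfolding ipoly_eval_def monom_eval_def by (induction P) auto

lemma ipoly_eval_append[simp]: "ipoly_eval (P @ Q) xs = ipoly_eval P xs + ipoly_eval Q xs"
  by (simp add: ipoly_eval_sum_monom)
lemma ipoly_eval_Nil[simp]: "ipoly_eval [] xs = 0" by (simp add: ipoly_eval_sum_monom)
lemma ipoly_eval_concat: "ipoly_eval (concat Ps) xs = sum_list (map (\<lambda>P. ipoly_eval P xs) Ps)"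
  by (induction Ps) auto

lemma ipoly_wf_append[simp]:
  "ipoly_wf N (P @ Q) \<longleftrightarrow> ipoly_wf N P \<and> ipoly_wf N Q" by (auto simp: ipoly_wf_def)
lemma ipoly_wf_concat:
  "(\<forall>P\<in>set Ps. ipoly_wf N P)
    \<Longrightarrow> ipoly_wf N (concat Ps)" by (auto simp: ipoly_wf_def)

definition nth_or_0 :: "nat list \<Rightarrow> nat \<Rightarrow> nat" where "nth_or_0 es i = (if i < length es then es ! i else 0)"

definition monom_mult :: "nat \<Rightarrow> int \<times> nat list \<Rightarrow> int \<times> nat list \<Rightarrow> int \<times> nat list" where
  "monom_mult N m1 m2 = (fst m1 * fst m2, map (\<lambda>i. nth_or_0 (snd m1) i + nth_or_0 (snd m2) i) [0..<N])"

definition ipoly_mult :: "nat \<Rightarrow> ipoly \<Rightarrow> ipoly \<Rightarrow> ipoly" where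
  "ipoly_mult N P Q = concat (map (\<lambda>m1. map (\<lambda>m2. monom_mult N m1 m2) Q) P)"

lemma monom_eval_mult:
  "length xs = N \<Longrightarrow> length (snd m1) = N \<Longrightarrow> length (snd m2) = N \<Longrightarrow>
  monom_eval (monom_mult N m1 m2) xs = monom_eval m1 xs * monom_eval m2 xs"
proof -
  assume l: "length xs = N" "length (snd m1) = N" "length (snd m2) = N"
  have "(\<Prod>i<N. xs ! i ^ (map (\<lambda>i. nth_or_0 (snd m1) i + nth_or_0 (snd m2) i) [0..<N] ! i))
      = (\<Prod>i<N. xs ! i ^ (snd m1 ! i) * xs ! i ^ (snd m2 ! i))"
    by (rule prod.cong) (use l in \<open>auto simp: nth_or_0_def power_add\<close>)
  also have "\<dots> = (\<Prod>i<N. xs ! i ^ (snd m1 ! i)) * (\<Prod>i<N. xs ! i ^ (snd m2 ! i))"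
    by (rule prod.distrib)
  finally show ?thesis unfolding monom_eval_def monom_mult_def using l by (simp add: ac_simps)
qed

lemma ipoly_eval_map_monom_mult:
  "length xs = N \<Longrightarrow> length (snd m1) = N \<Longrightarrow> ipoly_wf N Q \<Longrightarrow>
  ipoly_eval (map (monom_mult N m1) Q) xs = monom_eval m1 xs * ipoly_eval Q xs"
  by (induction Q) (auto simp: ipoly_eval_sum_monom ipoly_wf_def monom_eval_mult distrib_left)

lemma ipoly_eval_mult:
  "ipoly_wf N P \<Longrightarrow> ipoly_wf N Q \<Longrightarrow> length xs = N \<Longrightarrow>
  ipoly_eval (ipoly_mult N P Q) xs = ipoly_eval P xs * ipoly_eval Q xs"
proof (induction P)
  case Nil then show ?case by (simp add: ipoly_mult_def)
next
  case (Cons m1 P)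
  have "ipoly_mult N (m1 # P) Q = map (monom_mult N m1) Q @ ipoly_mult N P Q" by (simp add: ipoly_mult_def)
  moreover have "ipoly_eval (m1 # P) xs = monom_eval m1 xs + ipoly_eval P xs" by (simp add: ipoly_eval_sum_monom)
  ultimately show ?case using Cons by (simp add: ipoly_eval_map_monom_mult ipoly_wf_def distrib_right)
qed

lemma ipoly_wf_mult[simp]:
  "ipoly_wf N (ipoly_mult N P Q)" by (auto simp: ipoly_wf_def ipoly_mult_def monom_mult_def)

definition ipoly_const :: "nat \<Rightarrow> int \<Rightarrow> ipoly" where "ipoly_const N c = [(c, replicate N 0)]"
lemma ipoly_wf_const[simp]: "ipoly_wf N (ipoly_const N c)" by (simp add: ipoly_wf_def ipoly_const_def)
lemma monom_eval_const: "length xs = N \<Longrightarrow> monom_eval (c, replicate N 0) xs = of_int c"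
  by (simp add: monom_eval_def)
lemma monom_eval_unit:
  "length xs = N \<Longrightarrow> j < N
    \<Longrightarrow> monom_eval (c, map (\<lambda>i. if i = j then 1 else 0) [0..<N]) xs = of_int c * xs ! j"
proof -
  assume a: "length xs = N" "j < N"
  have "(\<Prod>i<N. xs ! i ^ (map (\<lambda>i. if i = j then 1 else 0) [0..<N] ! i)) = (\<Prod>i<N. if i = j then xs ! i else 1)"
    by (rule prod.cong) auto
  also have "\<dots> = xs ! j" using a by (simp add: prod.delta)
  finally show ?thesis unfolding monom_eval_def using a by simp
qed
lemma ipoly_eval_const[simp]: "length xs = N \<Longrightarrow> ipoly_eval (ipoly_const N c) xs = of_int c"
  by (simp add: ipoly_eval_sum_monom ipoly_const_def monom_eval_const)

definition ipoly_var :: "nat \<Rightarrow> nat \<Rightarrow> ipoly" where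
  "ipoly_var N j = [(1, map (\<lambda>i. if i = j then 1 else 0) [0..<N])]"
lemma ipoly_wf_var[simp]: "ipoly_wf N (ipoly_var N j)" by (simp add: ipoly_wf_def ipoly_var_def)
lemma ipoly_eval_var:
  "length xs = N \<Longrightarrow> j < N \<Longrightarrow> ipoly_eval (ipoly_var N j) xs = xs ! j"
  by (simp add: ipoly_eval_sum_monom ipoly_var_def monom_eval_unit)

definition ipoly_shift :: "ipoly \<Rightarrow> ipoly" where "ipoly_shift P = map (\<lambda>m. (fst m, 0 # snd m)) P"
lemma ipoly_wf_shift:
  "ipoly_wf n P \<Longrightarrow> ipoly_wf (Suc n) (ipoly_shift P)" by (auto simp: ipoly_wf_def ipoly_shift_def)
lemma monom_eval_shift: "monom_eval (fst m, 0 # snd m) (y # xs) = monom_eval m xs"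
  unfolding monom_eval_def by (subst length_Cons, subst prod.lessThan_Suc_shift) simp

lemma ipoly_eval_shift: "ipoly_eval (ipoly_shift P) (y # xs) = ipoly_eval P xs"
  unfolding ipoly_eval_sum_monom ipoly_shift_def by (simp add: comp_def monom_eval_shift)

definition ipoly_square :: "nat \<Rightarrow> ipoly \<Rightarrow> ipoly" where "ipoly_square N P = ipoly_mult N P P"

definition rat_of_code :: "nat \<Rightarrow> rat" where
  "rat_of_code r = of_int (int_decode (fst (prod_decode r))) / of_nat (Suc (snd (prod_decode r)))"

lemma rat_of_code_surj: "\<exists>z. rat_of_code z = r"
proof -
  obtain p q where pq: "quotient_of r = (p, q)" by (cases "quotient_of r")
  then have q: "q > 0" by (rule quotient_of_denom_pos)
  have "rat_of_code (prod_encode (int_encode p, nat q - 1)) = of_int p / of_nat (nat q)"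
    unfolding rat_of_code_def using q by simp
  also have "\<dots> = of_int p / of_int q" using q by simp
  also have "\<dots> = r" using quotient_of_div[OF pq] by simp
  finally show ?thesis by blast
qed

text \<open>For r coding the rational a/b, the polynomial b x_(i+1) - a, which vanishes exactly
  where the (i+1)-st coordinate is a/b. Coordinate 0 is reserved for an auxiliary variable.\<close>

definition ipoly_coord_diff :: "nat \<Rightarrow> nat \<Rightarrow> nat \<Rightarrow> ipoly" where
  "ipoly_coord_diff N i r = [(int (Suc (snd (prod_decode r))), map (\<lambda>l. if l = Suc i then 1 else 0) [0..<N]),
                (- int_decode (fst (prod_decode r)), replicate N 0)]"

lemma ipoly_wf_coord_diff[simp]:
  "ipoly_wf N (ipoly_coord_diff N i r)" by (simp add: ipoly_wf_def ipoly_coord_diff_def)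

lemma ipoly_eval_coord_diff: "length xs = n \<Longrightarrow> i < n \<Longrightarrow>
  ipoly_eval (ipoly_coord_diff (Suc n) i r) (y # xs) = of_nat (Suc (snd (prod_decode r))) * (xs ! i - rat_of_code r)"
proof -
  assume a: "length xs = n" "i < n"
  have l: "length (y # xs) = Suc n" using a by simp
  have "ipoly_eval (ipoly_coord_diff (Suc n) i r) (y # xs) = of_int (int (Suc (snd (prod_decode r)))) * (y # xs) ! Suc i
      + of_int (- int_decode (fst (prod_decode r)))"
    unfolding ipoly_eval_sum_monom ipoly_coord_diff_def using monom_eval_unit[OF l, of "Suc i"] monom_eval_const[OF l] a by simp
  also have "\<dots> = xs ! i * of_nat (Suc (snd (prod_decode r))) - of_int (int_decode (fst (prod_decode r)))"
    by simp
  also have "\<dots> = of_nat (Suc (snd (prod_decode r))) * (xs ! i - rat_of_code r)"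
    unfolding rat_of_code_def by (simp add: field_simps)
  finally show ?thesis .
qed

lemma sum_list_map_upt: "sum_list (map f [0..<n]) = (\<Sum>i<n. f i)"
  by (induction n) (simp_all add: upt_Suc)

definition ipoly_point_dist :: "nat \<Rightarrow> nat \<Rightarrow> ipoly" where
  "ipoly_point_dist n t = concat (map (\<lambda>i. ipoly_square (Suc n) (ipoly_coord_diff (Suc n) i (nth_code t i))) [0..<n])"

lemma ipoly_wf_point_dist[simp]:
  "ipoly_wf (Suc n) (ipoly_point_dist n t)" by (auto simp: ipoly_point_dist_def ipoly_square_def intro!: ipoly_wf_concat)

definition point_of_code :: "nat \<Rightarrow> nat \<Rightarrow> rat list" where "point_of_code n t = map (\<lambda>i. rat_of_code (nth_code t i)) [0..<n]"

lemma ipoly_eval_point_dist: "length xs = n \<Longrightarrow>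
  ipoly_eval (ipoly_point_dist n t) (y # xs) = (\<Sum>i<n. (of_nat (Suc (snd (prod_decode (nth_code t i)))) * (xs ! i - rat_of_code (nth_code t i)))^2)"
proof -
  assume a: "length xs = n"
  have "ipoly_eval (ipoly_point_dist n t) (y # xs) = sum_list (map (\<lambda>i. ipoly_eval (ipoly_square (Suc n) (ipoly_coord_diff (Suc n) i (nth_code t i))) (y # xs)) [0..<n])"
    unfolding ipoly_point_dist_def ipoly_eval_concat by (simp add: comp_def)
  also have "\<dots> = sum_list (map (\<lambda>i. (of_nat (Suc (snd (prod_decode (nth_code t i)))) * (xs ! i - rat_of_code (nth_code t i)))^2) [0..<n])"
    by (rule arg_cong[where f=sum_list], rule map_cong, rule refl)
       (use a in \<open>simp add: ipoly_square_def ipoly_eval_mult ipoly_eval_coord_diff power2_eq_square\<close>)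
  also have "\<dots> = (\<Sum>i<n. (of_nat (Suc (snd (prod_decode (nth_code t i)))) * (xs ! i - rat_of_code (nth_code t i)))^2)"
    by (rule sum_list_map_upt)
  finally show ?thesis .
qed

lemma ipoly_point_dist_eq_0_iff:
  "length xs = n \<Longrightarrow> ipoly_eval (ipoly_point_dist n t) (y # xs) = 0
    \<longleftrightarrow> xs = point_of_code n t"
proof -
  assume a: "length xs = n"
  let ?f = "\<lambda>i. (of_nat (Suc (snd (prod_decode (nth_code t i)))) * (xs ! i - rat_of_code (nth_code t i)))^2 :: rat"
  have "(\<Sum>i<n. ?f i) = 0 \<longleftrightarrow> (\<forall>i\<in>{..<n}. ?f i = 0)"
    by (rule sum_nonneg_eq_0_iff) auto
  also have "\<dots> \<longleftrightarrow> (\<forall>i<n. xs ! i = rat_of_code (nth_code t i))" by auto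
  also have "\<dots> \<longleftrightarrow> xs = point_of_code n t" using a by (auto simp: point_of_code_def list_eq_iff_nth_eq)
  finally show ?thesis using ipoly_eval_point_dist[OF a] by simp
qed

definition ipoly_points_prod :: "nat \<Rightarrow> nat list \<Rightarrow> ipoly" where
  "ipoly_points_prod n ts = foldl (\<lambda>acc t. ipoly_mult (Suc n) acc (ipoly_point_dist n t)) (ipoly_const (Suc n) 1) ts"

lemma ipoly_points_prod_foldl:
  "ipoly_wf (Suc n) (foldl (\<lambda>acc t. ipoly_mult (Suc n) acc (ipoly_point_dist n t)) P ts) \<and>
  (length xs = n \<longrightarrow> ipoly_eval (foldl (\<lambda>acc t. ipoly_mult (Suc n) acc (ipoly_point_dist n t)) P ts) (y # xs)
     = ipoly_eval P (y # xs) * prod_list (map (\<lambda>t. ipoly_eval (ipoly_point_dist n t) (y # xs)) ts))" if "ipoly_wf (Suc n) P"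
  using that
proof (induction ts arbitrary: P)
  case Nil then show ?case by simp
next
  case (Cons t ts)
  have w: "ipoly_wf (Suc n) (ipoly_mult (Suc n) P (ipoly_point_dist n t))" by simp
  show ?case using Cons.IH[OF w] Cons.prems by (auto simp: ipoly_eval_mult)
qed

text \<open>D^2 + (x_0 \<Prod>t. S_t - 1)^2, where S_t is a sum of squares vanishing exactly at the point
  coded by t. It has a rational zero iff D has a zero outside the listed points (Rabinowitsch's
  trick).\<close>

definition ipoly_avoiding :: "nat \<Rightarrow> ipoly \<Rightarrow> nat list \<Rightarrow> ipoly" where
  "ipoly_avoiding n D ts = ipoly_square (Suc n) (ipoly_shift D) @ ipoly_square (Suc n) (ipoly_mult (Suc n) (ipoly_var (Suc n) 0) (ipoly_points_prod n ts) @ ipoly_const (Suc n) (-1))"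

lemma ipoly_wf_avoiding:
  "ipoly_wf (Suc n) (ipoly_avoiding n D ts)" by (simp add: ipoly_avoiding_def ipoly_square_def)

lemma ipoly_eval_avoiding: "ipoly_wf n D \<Longrightarrow> length xs = n \<Longrightarrow>
  ipoly_eval (ipoly_avoiding n D ts) (y # xs) = (ipoly_eval D xs)^2 + (y * prod_list (map (\<lambda>t. ipoly_eval (ipoly_point_dist n t) (y # xs)) ts) - 1)^2"
proof -
  assume a: "ipoly_wf n D" "length xs = n"
  have wP: "ipoly_wf (Suc n) (ipoly_points_prod n ts)" using ipoly_points_prod_foldl[of n "ipoly_const (Suc n) 1" ts] by (simp add: ipoly_points_prod_def)
  have eP: "ipoly_eval (ipoly_points_prod n ts) (y # xs) = prod_list (map (\<lambda>t. ipoly_eval (ipoly_point_dist n t) (y # xs)) ts)"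
    using ipoly_points_prod_foldl[of n "ipoly_const (Suc n) 1" ts xs y] a by (simp add: ipoly_points_prod_def)
  show ?thesis unfolding ipoly_avoiding_def ipoly_square_def
    using a wP eP ipoly_wf_shift[OF a(1)]
    by (simp add: ipoly_eval_mult ipoly_eval_shift ipoly_eval_var power2_eq_square)
qed

lemma ipoly_avoiding_root_iff: "ipoly_wf n D \<Longrightarrow>
  (\<exists>z. length z = Suc n \<and> ipoly_eval (ipoly_avoiding n D ts) z = 0) \<longleftrightarrow>
  (\<exists>xs. length xs = n \<and> ipoly_eval D xs = 0 \<and> (\<forall>t\<in>set ts. xs \<noteq> point_of_code n t))"
proof
  assume w: "ipoly_wf n D"
  assume "\<exists>z. length z = Suc n \<and> ipoly_eval (ipoly_avoiding n D ts) z = 0"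
  then obtain y xs where z: "length xs = n" "ipoly_eval (ipoly_avoiding n D ts) (y # xs) = 0"
    by (metis length_Suc_conv)
  let ?P = "prod_list (map (\<lambda>t. ipoly_eval (ipoly_point_dist n t) (y # xs)) ts)"
  have "(ipoly_eval D xs)^2 + (y * ?P - 1)^2 = 0" using z ipoly_eval_avoiding[OF w z(1)] by simp
  then have d: "ipoly_eval D xs = 0" and p: "y * ?P = 1" by (auto simp: sum_power2_eq_zero_iff)
  have "\<forall>t\<in>set ts. xs \<noteq> point_of_code n t"
  proof
    fix t assume t: "t \<in> set ts"
    have "?P \<noteq> 0" using p by auto
    then have "ipoly_eval (ipoly_point_dist n t) (y # xs) \<noteq> 0" using t by (auto simp: prod_list_zero_iff)
    then show "xs \<noteq> point_of_code n t" using ipoly_point_dist_eq_0_iff[OF z(1)] by simp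
  qed
  then show "\<exists>xs. length xs = n \<and> ipoly_eval D xs = 0 \<and> (\<forall>t\<in>set ts. xs \<noteq> point_of_code n t)" using z d by blast
next
  assume w: "ipoly_wf n D"
  assume "\<exists>xs. length xs = n \<and> ipoly_eval D xs = 0 \<and> (\<forall>t\<in>set ts. xs \<noteq> point_of_code n t)"
  then obtain xs where x: "length xs = n" "ipoly_eval D xs = 0" "\<forall>t\<in>set ts. xs \<noteq> point_of_code n t" by blast
  let ?P = "prod_list (map (\<lambda>t. ipoly_eval (ipoly_point_dist n t) (0 # xs)) ts)"
  have "?P \<noteq> 0" using x(3) ipoly_point_dist_eq_0_iff[OF x(1)] by (auto simp: prod_list_zero_iff)
  have P': "prod_list (map (\<lambda>t. ipoly_eval (ipoly_point_dist n t) (y # xs)) ts) = ?P" for y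
    by (rule arg_cong[where f=prod_list], rule map_cong) (auto simp: ipoly_eval_point_dist[OF x(1)])
  let ?y = "inverse ?P"
  have "ipoly_eval (ipoly_avoiding n D ts) (?y # xs) = 0"
    using ipoly_eval_avoiding[OF w x(1), of ts ?y] x(2) P'[of ?y] \<open>?P \<noteq> 0\<close> by simp
  then show "\<exists>z. length z = Suc n \<and> ipoly_eval (ipoly_avoiding n D ts) z = 0" using x(1)
    by (intro exI[of _ "?y # xs"]) simp
qed

section \<open>Codes of polynomials\<close>

definition monom_encode :: "int \<times> nat list \<Rightarrow> nat" where "monom_encode m = prod_encode (int_encode (fst m), list_encode (snd m))"
definition monom_decode :: "nat \<Rightarrow> int \<times> nat list" where "monom_decode a = (int_decode (fst (prod_decode a)), list_decode (snd (prod_decode a)))"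
definition ipoly_encode :: "ipoly \<Rightarrow> nat" where "ipoly_encode P = list_encode (map monom_encode P)"
definition ipoly_decode :: "nat \<Rightarrow> ipoly" where "ipoly_decode l = map monom_decode (list_decode l)"

lemma monom_decode_encode[simp]:
  "monom_decode (monom_encode m) = m" by (simp add: monom_decode_def monom_encode_def)
lemma monom_encode_decode[simp]:
  "monom_encode (monom_decode a) = a" by (simp add: monom_decode_def monom_encode_def)
lemma ipoly_decode_encode[simp]:
  "ipoly_decode (ipoly_encode P) = P" by (simp add: ipoly_decode_def ipoly_encode_def comp_def)
lemma ipoly_encode_decode[simp]:
  "ipoly_encode (ipoly_decode l) = l" by (simp add: ipoly_decode_def ipoly_encode_def comp_def)

lemma decode_poly_eq: "decode_poly k = (fst (prod_decode k), ipoly_decode (snd (prod_decode k)))"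
  by (simp add: decode_poly_def ipoly_decode_def monom_decode_def split: prod.splits)

definition monom_mult_code :: "nat \<Rightarrow> nat \<Rightarrow> nat \<Rightarrow> nat" where
  "monom_mult_code N x y = prod_encode (int_encode (int_decode (fst (prod_decode x)) * int_decode (fst (prod_decode y))),
     list_encode (map (\<lambda>i. nth_code (snd (prod_decode x)) i + nth_code (snd (prod_decode y)) i) [0..<N]))"

lemma nth_code_eq_nth_or_0:
  "nth_code (list_encode es) i = nth_or_0 es i" by (simp add: nth_code_list_encode nth_or_0_def)

lemma monom_encode_mult:
  "monom_encode (monom_mult N m1 m2) = monom_mult_code N (monom_encode m1) (monom_encode m2)"
  by (simp add: monom_encode_def monom_mult_def monom_mult_code_def nth_code_eq_nth_or_0)

lemma computable_monom_mult_code[computable_intros]: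
  "computable m N \<Longrightarrow> computable m X \<Longrightarrow> computable m Y
    \<Longrightarrow> computable m (\<lambda>v. monom_mult_code (N v) (X v) (Y v))"
proof -
  assume N: "computable m N" and X: "computable m X" and Y: "computable m Y"
  have T: "computable m (\<lambda>v. list_encode (map (\<lambda>i. nth_code (snd (prod_decode (X v))) i + nth_code (snd (prod_decode (Y v))) i) [0..<N v]))"
    by (rule computable_map_upt_code'[where F="\<lambda>w. nth_code (snd (prod_decode (X (tl w)))) (w!0) + nth_code (snd (prod_decode (Y (tl w)))) (w!0)"])
       (auto intro!: computable_intros computable_tl_args X Y N)
  show ?thesis unfolding monom_mult_code_def by (intro computable_intros T X Y)
qed

definition ipoly_mult_code :: "nat \<Rightarrow> nat \<Rightarrow> nat \<Rightarrow> nat" where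
  "ipoly_mult_code N a b = list_encode (concat (map list_decode (map (\<lambda>x. list_encode (map (\<lambda>y. monom_mult_code N x y) (list_decode b))) (list_decode a))))"

lemma ipoly_encode_mult:
  "ipoly_encode (ipoly_mult N P Q) = ipoly_mult_code N (ipoly_encode P) (ipoly_encode Q)"
  by (simp add: ipoly_encode_def ipoly_mult_def ipoly_mult_code_def map_concat comp_def monom_encode_mult)

lemma computable_ipoly_mult_code[computable_intros]:
  "computable m N \<Longrightarrow> computable m A \<Longrightarrow> computable m B
    \<Longrightarrow> computable m (\<lambda>v. ipoly_mult_code (N v) (A v) (B v))"
proof -
  assume N: "computable m N" and A: "computable m A" and B: "computable m B"
  have inner: "computable (Suc m) (\<lambda>w. list_encode (map (\<lambda>y. monom_mult_code (N (tl w)) (w!0) y) (list_decode (B (tl w)))))"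
    by (rule computable_map_code'[where F="\<lambda>u. monom_mult_code (N (tl (tl u))) (u!Suc 0) (u!0)"])
       (auto intro!: computable_intros computable_tl_args computable_tl_tl_args N B)
  have outer: "computable m (\<lambda>v. list_encode (map (\<lambda>x. list_encode (map (\<lambda>y. monom_mult_code (N v) x y) (list_decode (B v)))) (list_decode (A v))))"
    by (rule computable_map_code'[OF inner A]) simp
  show ?thesis unfolding ipoly_mult_code_def using computable_concat_code[OF outer] by simp
qed

definition zeros_code :: "nat \<Rightarrow> nat" where "zeros_code N = list_encode (map (\<lambda>i. 0) [0..<N])"
lemma zeros_code_eq:
  "zeros_code N = list_encode (replicate N 0)" by (simp add: zeros_code_def map_replicate_const)
lemma computable_zeros_code[computable_intros]:
  "computable m N \<Longrightarrow> computable m (\<lambda>v. zeros_code (N v))"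
  unfolding zeros_code_def by (rule computable_map_upt_code'[where F="\<lambda>_. 0"]) (auto intro: computable_intros)

definition unit_vec_code :: "nat \<Rightarrow> nat \<Rightarrow> nat" where "unit_vec_code N j = list_encode (map (\<lambda>i. if i = j then 1 else 0) [0..<N])"
lemma computable_unit_vec_code[computable_intros]:
  "computable m N \<Longrightarrow> computable m J
    \<Longrightarrow> computable m (\<lambda>v. unit_vec_code (N v) (J v))"
  unfolding unit_vec_code_def
  by (rule computable_map_upt_code'[where F="\<lambda>w. if w!0 = J (tl w) then 1 else 0"]) (auto intro!: computable_intros computable_tl_args)

definition ipoly_const_code :: "nat \<Rightarrow> nat \<Rightarrow> nat" where "ipoly_const_code N z = cons_code (prod_encode (z, zeros_code N)) 0"
lemma ipoly_encode_const: "ipoly_encode (ipoly_const N c) = ipoly_const_code N (int_encode c)"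
  by (simp add: ipoly_encode_def ipoly_const_def ipoly_const_code_def monom_encode_def zeros_code_eq cons_code_def)
lemma computable_ipoly_const_code[computable_intros]:
  "computable m N \<Longrightarrow> computable m Z
    \<Longrightarrow> computable m (\<lambda>v. ipoly_const_code (N v) (Z v))"
  unfolding ipoly_const_code_def by (intro computable_intros)

definition ipoly_var_code :: "nat \<Rightarrow> nat \<Rightarrow> nat" where "ipoly_var_code N j = cons_code (prod_encode (int_encode 1, unit_vec_code N j)) 0"
lemma ipoly_encode_var: "ipoly_encode (ipoly_var N j) = ipoly_var_code N j"
  by (simp add: ipoly_encode_def ipoly_var_def ipoly_var_code_def monom_encode_def unit_vec_code_def cons_code_def)
lemma computable_ipoly_var_code[computable_intros]:
  "computable m N \<Longrightarrow> computable m J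
    \<Longrightarrow> computable m (\<lambda>v. ipoly_var_code (N v) (J v))"
  unfolding ipoly_var_code_def by (intro computable_intros)

definition append_code :: "nat \<Rightarrow> nat \<Rightarrow> nat" where "append_code a b = list_encode (list_decode a @ list_decode b)"
lemma ipoly_encode_append:
  "ipoly_encode (P @ Q) = append_code (ipoly_encode P) (ipoly_encode Q)" by (simp add: ipoly_encode_def append_code_def)
lemma computable_append_code[computable_intros]:
  "computable m A \<Longrightarrow> computable m B
    \<Longrightarrow> computable m (\<lambda>v. append_code (A v) (B v))"
  unfolding append_code_def by (rule computable_list_append_code)

definition ipoly_shift_code :: "nat \<Rightarrow> nat" where
  "ipoly_shift_code a = list_encode (map (\<lambda>x. prod_encode (fst (prod_decode x), cons_code 0 (snd (prod_decode x)))) (list_decode a))"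
lemma ipoly_encode_shift: "ipoly_encode (ipoly_shift P) = ipoly_shift_code (ipoly_encode P)"
  by (simp add: ipoly_encode_def ipoly_shift_def ipoly_shift_code_def monom_encode_def comp_def)
lemma computable_ipoly_shift_code[computable_intros]:
  "computable m A \<Longrightarrow> computable m (\<lambda>v. ipoly_shift_code (A v))"
  unfolding ipoly_shift_code_def
  by (rule computable_map_code'[where F="\<lambda>w. prod_encode (fst (prod_decode (w!0)), cons_code 0 (snd (prod_decode (w!0))))"])
     (auto intro!: computable_intros)

definition ipoly_coord_diff_code :: "nat \<Rightarrow> nat \<Rightarrow> nat \<Rightarrow> nat" where
  "ipoly_coord_diff_code N i r = cons_code (prod_encode (int_encode (int (Suc (snd (prod_decode r)))), unit_vec_code N (Suc i)))
     (cons_code (prod_encode (int_encode (- int_decode (fst (prod_decode r))), zeros_code N)) 0)"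
lemma ipoly_encode_coord_diff: "ipoly_encode (ipoly_coord_diff N i r) = ipoly_coord_diff_code N i r"
  by (simp add: ipoly_encode_def ipoly_coord_diff_def ipoly_coord_diff_code_def monom_encode_def unit_vec_code_def zeros_code_eq cons_code_def)
lemma computable_ipoly_coord_diff_code[computable_intros]:
  "computable m N \<Longrightarrow> computable m I \<Longrightarrow> computable m R
    \<Longrightarrow> computable m (\<lambda>v. ipoly_coord_diff_code (N v) (I v) (R v))"
  unfolding ipoly_coord_diff_code_def by (intro computable_intros)

lemma ipoly_encode_concat:
  "ipoly_encode (concat Ps) = list_encode (concat (map list_decode (map ipoly_encode Ps)))"
  by (simp add: ipoly_encode_def map_concat comp_def)

definition ipoly_point_dist_code :: "nat \<Rightarrow> nat \<Rightarrow> nat" where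
  "ipoly_point_dist_code n t = list_encode (concat (map list_decode (map (\<lambda>i. ipoly_mult_code (Suc n) (ipoly_coord_diff_code (Suc n) i (nth_code t i)) (ipoly_coord_diff_code (Suc n) i (nth_code t i))) [0..<n])))"
lemma ipoly_encode_point_dist: "ipoly_encode (ipoly_point_dist n t) = ipoly_point_dist_code n t"
  by (simp add: ipoly_point_dist_def ipoly_point_dist_code_def ipoly_encode_concat ipoly_square_def ipoly_encode_mult ipoly_encode_coord_diff comp_def)
lemma computable_ipoly_point_dist_code[computable_intros]:
  "computable m N \<Longrightarrow> computable m T
    \<Longrightarrow> computable m (\<lambda>v. ipoly_point_dist_code (N v) (T v))"
proof -
  assume N: "computable m N" and T: "computable m T"
  have "computable m (\<lambda>v. list_encode (map (\<lambda>i. ipoly_mult_code (Suc (N v)) (ipoly_coord_diff_code (Suc (N v)) i (nth_code (T v) i)) (ipoly_coord_diff_code (Suc (N v)) i (nth_code (T v) i))) [0..<N v]))"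
    by (rule computable_map_upt_code'[where F="\<lambda>w. ipoly_mult_code (Suc (N (tl w))) (ipoly_coord_diff_code (Suc (N (tl w))) (w!0) (nth_code (T (tl w)) (w!0))) (ipoly_coord_diff_code (Suc (N (tl w))) (w!0) (nth_code (T (tl w)) (w!0)))"])
       (auto intro!: computable_intros computable_tl_args N T)
  from computable_concat_code[OF this] show ?thesis unfolding ipoly_point_dist_code_def by simp
qed

definition ipoly_points_prod_code :: "nat \<Rightarrow> nat \<Rightarrow> nat" where
  "ipoly_points_prod_code n j = foldl (\<lambda>acc t. ipoly_mult_code (Suc n) acc (ipoly_point_dist_code n t)) (ipoly_const_code (Suc n) (int_encode 1)) (list_decode j)"

lemma ipoly_encode_points_prod_foldl:
  "ipoly_encode (foldl (\<lambda>acc t. ipoly_mult (Suc n) acc (ipoly_point_dist n t)) P ts) = foldl (\<lambda>acc t. ipoly_mult_code (Suc n) acc (ipoly_point_dist_code n t)) (ipoly_encode P) ts"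
  by (induction ts arbitrary: P) (simp_all add: ipoly_encode_mult ipoly_encode_point_dist)

lemma ipoly_encode_points_prod:
  "ipoly_encode (ipoly_points_prod n ts) = ipoly_points_prod_code n (list_encode ts)"
  by (simp add: ipoly_points_prod_def ipoly_points_prod_code_def ipoly_encode_points_prod_foldl ipoly_encode_const)

lemma computable_ipoly_points_prod_code[computable_intros]:
  "computable m N \<Longrightarrow> computable m J
    \<Longrightarrow> computable m (\<lambda>v. ipoly_points_prod_code (N v) (J v))"
  unfolding ipoly_points_prod_code_def
  by (rule computable_foldl_code'[where G="\<lambda>w. ipoly_mult_code (Suc (N (tl (tl w)))) (w!Suc 0) (ipoly_point_dist_code (N (tl (tl w))) (w!0))"])
     (auto intro!: computable_intros computable_tl_tl_args)

definition ipoly_avoiding_code :: "nat \<Rightarrow> nat \<Rightarrow> nat \<Rightarrow> nat" where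
  "ipoly_avoiding_code n d j = append_code (ipoly_mult_code (Suc n) (ipoly_shift_code d) (ipoly_shift_code d))
     (ipoly_mult_code (Suc n) (append_code (ipoly_mult_code (Suc n) (ipoly_var_code (Suc n) 0) (ipoly_points_prod_code n j)) (ipoly_const_code (Suc n) (int_encode (-1))))
                    (append_code (ipoly_mult_code (Suc n) (ipoly_var_code (Suc n) 0) (ipoly_points_prod_code n j)) (ipoly_const_code (Suc n) (int_encode (-1)))))"

lemma ipoly_encode_avoiding:
  "ipoly_encode (ipoly_avoiding n D ts) = ipoly_avoiding_code n (ipoly_encode D) (list_encode ts)"
  by (simp add: ipoly_avoiding_def ipoly_avoiding_code_def ipoly_square_def ipoly_encode_append ipoly_encode_mult ipoly_encode_shift ipoly_encode_var ipoly_encode_points_prod ipoly_encode_const)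

lemma computable_ipoly_avoiding_code[computable_intros]:
  "computable m N \<Longrightarrow> computable m D \<Longrightarrow> computable m J
    \<Longrightarrow> computable m (\<lambda>v. ipoly_avoiding_code (N v) (D v) (J v))"
  unfolding ipoly_avoiding_code_def by (intro computable_intros)

lemma valid_code_iff: "valid_code k \<longleftrightarrow> 1 \<le> fst (prod_decode k) \<and>
  (\<forall>a\<in>set (list_decode (snd (prod_decode k))). length (list_decode (snd (prod_decode a))) = fst (prod_decode k))"
  by (auto simp: valid_code_def decode_poly_eq ipoly_decode_def monom_decode_def)

lemma decidable_valid_code[computable_intros]:
  "computable m K \<Longrightarrow> decidable m (\<lambda>v. valid_code (K v))"
proof -
  assume K: "computable m K"
  have "decidable m (\<lambda>v. \<forall>a\<in>set (list_decode (snd (prod_decode (K v)))). length (list_decode (snd (prod_decode a))) = fst (prod_decode (K v)))"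
    by (rule decidable_ball_code'[where P="\<lambda>w. length (list_decode (snd (prod_decode (w!0)))) = fst (prod_decode (K (tl w)))"])
       (auto intro!: computable_intros computable_tl_args K)
  then have "decidable m (\<lambda>v. 1 \<le> fst (prod_decode (K v)) \<and> (\<forall>a\<in>set (list_decode (snd (prod_decode (K v)))). length (list_decode (snd (prod_decode a))) = fst (prod_decode (K v))))"
    by (intro decidable_conj decidable_le computable_const computable_fst_prod_decode K)
  then show ?thesis by (simp add: valid_code_iff)
qed

lemma valid_code_iff_decode_poly:
  "valid_code k \<longleftrightarrow> 1 \<le> fst (decode_poly k) \<and> ipoly_wf (fst (decode_poly k)) (snd (decode_poly k))"
  by (auto simp: valid_code_def ipoly_wf_def split: prod.splits)

lemma valid_code_ipoly_wf:
  "valid_code k \<Longrightarrow> ipoly_wf (fst (prod_decode k)) (ipoly_decode (snd (prod_decode k)))"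
  by (auto simp: valid_code_iff ipoly_wf_def ipoly_decode_def monom_decode_def)

lemma rat_solutions_eq:
  "rat_solutions k = {xs. length xs = fst (prod_decode k) \<and> ipoly_eval (ipoly_decode (snd (prod_decode k))) xs = 0}"
  by (simp add: rat_solutions_def decode_poly_eq)

lemma nth_list_decode_le: "i < length (list_decode l) \<Longrightarrow> list_decode l ! i \<le> l"
proof (induction l arbitrary: i rule: list_decode.induct)
  case 1 then show ?case by simp
next
  case (2 n)
  obtain x y where xy: "prod_decode n = (x, y)" by (cases "prod_decode n")
  have x: "x \<le> n" and y: "y \<le> n" using xy by (metis le_prod_encode_1 prod_decode_inverse, metis le_prod_encode_2 prod_decode_inverse)
  show ?case
  proof (cases i)
    case 0 then show ?thesis using xy x by simp
  next
    case (Suc i')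
    then have "i' < length (list_decode y)" using 2(2) xy by simp
    then have "list_decode y ! i' \<le> y" using 2(1)[OF xy[symmetric]] by blast
    then show ?thesis using Suc xy y by simp
  qed
qed

lemma set_list_decode_le: "a \<in> set (list_decode l) \<Longrightarrow> a \<le> l"
  by (metis in_set_conv_nth nth_list_decode_le)

lemma snd_prod_decode_le:
  "snd (prod_decode k) \<le> k" by (metis le_prod_encode_2 prod_decode_inverse surjective_pairing)

lemma exponent_le_code:
  "a \<in> set (list_decode (snd (prod_decode k)))
    \<Longrightarrow> i < length (list_decode (snd (prod_decode a))) \<Longrightarrow>
  list_decode (snd (prod_decode a)) ! i \<le> k"
proof -
  assume a: "a \<in> set (list_decode (snd (prod_decode k)))" "i < length (list_decode (snd (prod_decode a)))"
  have "list_decode (snd (prod_decode a)) ! i \<le> snd (prod_decode a)" by (rule nth_list_decode_le[OF a(2)])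
  also have "\<dots> \<le> a" by (rule snd_prod_decode_le)
  also have "\<dots> \<le> snd (prod_decode k)" by (rule set_list_decode_le[OF a(1)])
  also have "\<dots> \<le> k" by (rule snd_prod_decode_le)
  finally show ?thesis .
qed

section \<open>Solutions are recursively enumerable\<close>

text \<open>For j coding the rationals x_i = a_i/b_i, multiplying D(x) by \<Prod>i. b_i^k, with k bounding
  all exponents, turns every monomial into an integer with absolute value monom_scaled_abs and
  sign (-1)^monom_sign_exp. So D(x) = 0 becomes a decidable identity between natural numbers.\<close>

definition monom_scaled_abs :: "nat \<Rightarrow> nat \<Rightarrow> nat \<Rightarrow> nat \<Rightarrow> nat" where
  "monom_scaled_abs k n j a = int_code_abs (fst (prod_decode a)) * (\<Prod>i<n. int_code_abs (fst (prod_decode (nth_code j i))) ^ nth_code (snd (prod_decode a)) i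
      * Suc (snd (prod_decode (nth_code j i))) ^ (k - nth_code (snd (prod_decode a)) i))"

definition monom_sign_exp :: "nat \<Rightarrow> nat \<Rightarrow> nat \<Rightarrow> nat" where
  "monom_sign_exp n j a = (if odd (fst (prod_decode a)) then 1 else 0) + (\<Sum>i<n. if odd (fst (prod_decode (nth_code j i))) then nth_code (snd (prod_decode a)) i else 0)"

definition solution_witness :: "nat \<Rightarrow> nat \<Rightarrow> bool" where
  "solution_witness k j
    \<longleftrightarrow> valid_code k \<and> length (list_decode j) = fst (prod_decode k) \<and>
     sum_list (map (\<lambda>a. if even (monom_sign_exp (fst (prod_decode k)) j a) then monom_scaled_abs k (fst (prod_decode k)) j a else 0) (list_decode (snd (prod_decode k))))
   = sum_list (map (\<lambda>a. if odd (monom_sign_exp (fst (prod_decode k)) j a) then monom_scaled_abs k (fst (prod_decode k)) j a else 0) (list_decode (snd (prod_decode k))))"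

lemma computable_monom_scaled_abs[computable_intros]:
  "computable m K \<Longrightarrow> computable m N \<Longrightarrow> computable m J
    \<Longrightarrow> computable m A
    \<Longrightarrow> computable m (\<lambda>v. monom_scaled_abs (K v) (N v) (J v) (A v))"
proof -
  assume K: "computable m K" and N: "computable m N" and J: "computable m J" and A: "computable m A"
  have "computable m (\<lambda>v. \<Prod>i<N v. int_code_abs (fst (prod_decode (nth_code (J v) i))) ^ nth_code (snd (prod_decode (A v))) i
      * Suc (snd (prod_decode (nth_code (J v) i))) ^ (K v - nth_code (snd (prod_decode (A v))) i))"
    by (rule computable_prod_lessThan'[where F="\<lambda>w. int_code_abs (fst (prod_decode (nth_code (J (tl w)) (w!0)))) ^ nth_code (snd (prod_decode (A (tl w)))) (w!0)
      * Suc (snd (prod_decode (nth_code (J (tl w)) (w!0)))) ^ (K (tl w) - nth_code (snd (prod_decode (A (tl w)))) (w!0))"])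
       (auto intro!: computable_intros computable_tl_args K J A N)
  then show ?thesis unfolding monom_scaled_abs_def by (intro computable_intros A)
qed

lemma computable_monom_sign_exp[computable_intros]:
  "computable m N \<Longrightarrow> computable m J \<Longrightarrow> computable m A
    \<Longrightarrow> computable m (\<lambda>v. monom_sign_exp (N v) (J v) (A v))"
proof -
  assume N: "computable m N" and J: "computable m J" and A: "computable m A"
  have "computable m (\<lambda>v. \<Sum>i<N v. if odd (fst (prod_decode (nth_code (J v) i))) then nth_code (snd (prod_decode (A v))) i else 0)"
    by (rule computable_sum_lessThan'[where F="\<lambda>w. if odd (fst (prod_decode (nth_code (J (tl w)) (w!0)))) then nth_code (snd (prod_decode (A (tl w)))) (w!0) else 0"])
       (auto intro!: computable_intros computable_tl_args J A N)
  then show ?thesis unfolding monom_sign_exp_def by (intro computable_intros A)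
qed

lemma decidable_solution_witness[computable_intros]:
  "computable m K \<Longrightarrow> computable m J
    \<Longrightarrow> decidable m (\<lambda>v. solution_witness (K v) (J v))"
proof -
  assume K: "computable m K" and J: "computable m J"
  have s1: "computable m (\<lambda>v. sum_list (map (\<lambda>a. if even (monom_sign_exp (fst (prod_decode (K v))) (J v) a) then monom_scaled_abs (K v) (fst (prod_decode (K v))) (J v) a else 0) (list_decode (snd (prod_decode (K v))))))"
    by (rule computable_sum_list_code'[where F="\<lambda>w. if even (monom_sign_exp (fst (prod_decode (K (tl w)))) (J (tl w)) (w!0)) then monom_scaled_abs (K (tl w)) (fst (prod_decode (K (tl w)))) (J (tl w)) (w!0) else 0"])
       (auto intro!: computable_intros computable_tl_args J K)
  have s2: "computable m (\<lambda>v. sum_list (map (\<lambda>a. if odd (monom_sign_exp (fst (prod_decode (K v))) (J v) a) then monom_scaled_abs (K v) (fst (prod_decode (K v))) (J v) a else 0) (list_decode (snd (prod_decode (K v))))))"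
    by (rule computable_sum_list_code'[where F="\<lambda>w. if odd (monom_sign_exp (fst (prod_decode (K (tl w)))) (J (tl w)) (w!0)) then monom_scaled_abs (K (tl w)) (fst (prod_decode (K (tl w)))) (J (tl w)) (w!0) else 0"])
       (auto intro!: computable_intros computable_tl_args J K)
  show ?thesis unfolding solution_witness_def by (intro computable_intros s1 s2 K J)
qed

lemma int_decode_sign: "int_decode z = (-1) ^ (if odd z then 1 else 0) * int (int_code_abs z)"
  by (simp add: int_decode_via_abs)

lemma power_divide_mult_power:
  "e \<le> k \<Longrightarrow> (B::rat) \<noteq> 0
    \<Longrightarrow> (A / B) ^ e * B ^ k = A ^ e * B ^ (k - e)"
proof -
  assume e: "e \<le> k" and B: "B \<noteq> 0"
  have "B ^ k = B ^ e * B ^ (k - e)" using e by (simp add: power_add[symmetric])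
  then show ?thesis using B by (simp add: power_divide field_simps)
qed

lemma sum_list_signed: "sum_list (map (\<lambda>a. (-1::int) ^ (g a) * int (f a)) ms) =
  int (sum_list (map (\<lambda>a. if even (g a) then f a else 0) ms)) - int (sum_list (map (\<lambda>a. if odd (g a) then f a else 0) ms))"
  by (induction ms) auto

lemma monom_eval_scaled:
  "length xs = n \<Longrightarrow> (\<forall>i<n. xs ! i = rat_of_code (nth_code j i)) \<Longrightarrow>
  length (list_decode (snd (prod_decode a))) = n
    \<Longrightarrow> (\<forall>i<n. list_decode (snd (prod_decode a)) ! i \<le> k) \<Longrightarrow>
  monom_eval (monom_decode a) xs * (\<Prod>i<n. (of_nat (Suc (snd (prod_decode (nth_code j i)))) :: rat) ^ k)
   = of_int ((-1) ^ monom_sign_exp n j a * int (monom_scaled_abs k n j a))"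
proof -
  assume l: "length xs = n" and x: "\<forall>i<n. xs ! i = rat_of_code (nth_code j i)"
    and le: "length (list_decode (snd (prod_decode a))) = n" and b: "\<forall>i<n. list_decode (snd (prod_decode a)) ! i \<le> k"
  let ?es = "list_decode (snd (prod_decode a))"
  let ?A = "\<lambda>i. int_decode (fst (prod_decode (nth_code j i)))"
  let ?B = "\<lambda>i. Suc (snd (prod_decode (nth_code j i)))"
  have ne: "nth_code (snd (prod_decode a)) i = ?es ! i" if "i < n" for i
    using nth_code_list_encode[of ?es i] le that by simp
  have "monom_eval (monom_decode a) xs * (\<Prod>i<n. (of_nat (?B i) :: rat) ^ k)
      = of_int (int_decode (fst (prod_decode a))) * ((\<Prod>i<n. (of_int (?A i) / of_nat (?B i)) ^ (?es ! i)) * (\<Prod>i<n. (of_nat (?B i) :: rat) ^ k))"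
    unfolding monom_eval_def monom_decode_def using l x by (simp add: rat_of_code_def)
  also have "(\<Prod>i<n. (of_int (?A i) / of_nat (?B i)) ^ (?es ! i)) * (\<Prod>i<n. (of_nat (?B i) :: rat) ^ k)
      = (\<Prod>i<n. of_int (?A i) ^ (?es ! i) * (of_nat (?B i) :: rat) ^ (k - ?es ! i))"
    unfolding prod.distrib[symmetric] by (rule prod.cong[OF refl]) (use b in \<open>simp add: power_divide_mult_power\<close>)
  also have "\<dots> = of_int (\<Prod>i<n. ?A i ^ (?es ! i) * int (?B i) ^ (k - ?es ! i))" by simp
  finally have e1: "monom_eval (monom_decode a) xs * (\<Prod>i<n. (of_nat (?B i) :: rat) ^ k)
     = of_int (int_decode (fst (prod_decode a)) * (\<Prod>i<n. ?A i ^ (?es ! i) * int (?B i) ^ (k - ?es ! i)))" by simp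
  have fac: "?A i ^ (?es ! i) * int (?B i) ^ (k - ?es ! i) =
     (-1) ^ (if odd (fst (prod_decode (nth_code j i))) then ?es ! i else 0) *
     int (int_code_abs (fst (prod_decode (nth_code j i))) ^ (?es ! i) * ?B i ^ (k - ?es ! i))" for i
    unfolding int_decode_sign by (simp add: power_mult_distrib power_mult[symmetric])
  have "(\<Prod>i<n. ?A i ^ (?es ! i) * int (?B i) ^ (k - ?es ! i)) =
     (\<Prod>i<n. (-1) ^ (if odd (fst (prod_decode (nth_code j i))) then ?es ! i else 0)) *
     (\<Prod>i<n. int (int_code_abs (fst (prod_decode (nth_code j i))) ^ (?es ! i) * ?B i ^ (k - ?es ! i)))"
    unfolding fac prod.distrib ..
  also have "\<dots> = (-1) ^ (\<Sum>i<n. if odd (fst (prod_decode (nth_code j i))) then ?es ! i else 0) *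
     int (\<Prod>i<n. int_code_abs (fst (prod_decode (nth_code j i))) ^ (?es ! i) * ?B i ^ (k - ?es ! i))"
    by (simp add: power_sum)
  finally have e2: "(\<Prod>i<n. ?A i ^ (?es ! i) * int (?B i) ^ (k - ?es ! i)) = \<dots>" .
  have e3: "(\<Sum>i<n. if odd (fst (prod_decode (nth_code j i))) then ?es ! i else 0) =
      (\<Sum>i<n. if odd (fst (prod_decode (nth_code j i))) then nth_code (snd (prod_decode a)) i else 0)"
    by (rule sum.cong[OF refl]) (simp add: ne)
  have e4: "(\<Prod>i<n. int_code_abs (fst (prod_decode (nth_code j i))) ^ (?es ! i) * ?B i ^ (k - ?es ! i)) =
      (\<Prod>i<n. int_code_abs (fst (prod_decode (nth_code j i))) ^ nth_code (snd (prod_decode a)) i * ?B i ^ (k - nth_code (snd (prod_decode a)) i))"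
    by (rule prod.cong[OF refl]) (simp add: ne)
  have "int_decode (fst (prod_decode a)) * (\<Prod>i<n. ?A i ^ (?es ! i) * int (?B i) ^ (k - ?es ! i))
     = (-1) ^ monom_sign_exp n j a * int (monom_scaled_abs k n j a)"
    unfolding e2 e3 e4 monom_sign_exp_def monom_scaled_abs_def by (subst int_decode_sign) (simp add: power_add)
  then show ?thesis using e1 by simp
qed

lemma solution_witness_iff:
  "valid_code k \<Longrightarrow> solution_witness k j
    \<longleftrightarrow> length (list_decode j) = fst (prod_decode k) \<and>
   ipoly_eval (ipoly_decode (snd (prod_decode k))) (map rat_of_code (list_decode j)) = 0"
proof -
  assume v: "valid_code k"
  let ?n = "fst (prod_decode k)" and ?ms = "list_decode (snd (prod_decode k))"
  show ?thesis
  proof (cases "length (list_decode j) = ?n")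
    case False then show ?thesis by (simp add: solution_witness_def)
  next
    case True
    let ?xs = "map rat_of_code (list_decode j)"
    let ?B = "(\<Prod>i<?n. (of_nat (Suc (snd (prod_decode (nth_code j i)))) :: rat) ^ k)"
    have l: "length ?xs = ?n" using True by simp
    have x: "\<forall>i<?n. ?xs ! i = rat_of_code (nth_code j i)"
      using True nth_code_list_encode[of "list_decode j"] by simp
    have B: "?B \<noteq> 0" by simp
    have "ipoly_eval (ipoly_decode (snd (prod_decode k))) ?xs * ?B = sum_list (map (\<lambda>a. monom_eval (monom_decode a) ?xs * ?B) ?ms)"
      by (simp add: ipoly_eval_sum_monom ipoly_decode_def comp_def sum_list_mult_const)
    also have "\<dots> = sum_list (map (\<lambda>a. of_int ((-1) ^ monom_sign_exp ?n j a * int (monom_scaled_abs k ?n j a))) ?ms)"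
    proof (rule arg_cong[where f=sum_list], rule map_cong[OF refl])
      fix a assume a: "a \<in> set ?ms"
      have la: "length (list_decode (snd (prod_decode a))) = ?n" using v a by (simp add: valid_code_iff)
      have ba: "\<forall>i<?n. list_decode (snd (prod_decode a)) ! i \<le> k" using exponent_le_code[OF a] la by simp
      show "monom_eval (monom_decode a) ?xs * ?B = of_int ((-1) ^ monom_sign_exp ?n j a * int (monom_scaled_abs k ?n j a))"
        by (rule monom_eval_scaled[OF l x la ba])
    qed
    also have "\<dots> = of_int (sum_list (map (\<lambda>a. (-1) ^ monom_sign_exp ?n j a * int (monom_scaled_abs k ?n j a)) ?ms))"
      using sum_list_of_int[of "map (\<lambda>a. (-1) ^ monom_sign_exp ?n j a * int (monom_scaled_abs k ?n j a)) ?ms"] by (simp add: comp_def)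
    also have "\<dots> = of_int (int (sum_list (map (\<lambda>a. if even (monom_sign_exp ?n j a) then monom_scaled_abs k ?n j a else 0) ?ms))
       - int (sum_list (map (\<lambda>a. if odd (monom_sign_exp ?n j a) then monom_scaled_abs k ?n j a else 0) ?ms)))"
      by (simp only: sum_list_signed)
    finally have e: "ipoly_eval (ipoly_decode (snd (prod_decode k))) ?xs * ?B = \<dots>" .
    have "ipoly_eval (ipoly_decode (snd (prod_decode k))) ?xs = 0
      \<longleftrightarrow> ipoly_eval (ipoly_decode (snd (prod_decode k))) ?xs * ?B = 0"
      using B by simp
    also have "\<dots> \<longleftrightarrow> sum_list (map (\<lambda>a. if even (monom_sign_exp ?n j a) then monom_scaled_abs k ?n j a else 0) ?ms)
       = sum_list (map (\<lambda>a. if odd (monom_sign_exp ?n j a) then monom_scaled_abs k ?n j a else 0) ?ms)"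
      unfolding e by simp
    finally show ?thesis using v True by (simp add: solution_witness_def)
  qed
qed

lemma rat_list_of_codes_surj: "\<exists>zs. map rat_of_code zs = xs"
proof (induction xs)
  case Nil then show ?case by simp
next
  case (Cons x xs)
  then obtain zs where "map rat_of_code zs = xs" by blast
  moreover obtain z where "rat_of_code z = x" using rat_of_code_surj by blast
  ultimately show ?case by (intro exI[of _ "z # zs"]) simp
qed

lemma has_rat_solution_set_iff_witness:
  "k \<in> has_rat_solution_set \<longleftrightarrow> (\<exists>j. solution_witness k j)"
proof
  assume "k \<in> has_rat_solution_set"
  then have v: "valid_code k" and "rat_solutions k \<noteq> {}" by (auto simp: has_rat_solution_set_def)
  then obtain xs where xs: "length xs = fst (prod_decode k)" "ipoly_eval (ipoly_decode (snd (prod_decode k))) xs = 0"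
    by (auto simp: rat_solutions_eq)
  obtain zs where zs: "map rat_of_code zs = xs" using rat_list_of_codes_surj by blast
  have "solution_witness k (list_encode zs)" using solution_witness_iff[OF v] xs zs by auto
  then show "\<exists>j. solution_witness k j" by blast
next
  assume "\<exists>j. solution_witness k j"
  then obtain j where w: "solution_witness k j" by blast
  then have v: "valid_code k" by (simp add: solution_witness_def)
  have "map rat_of_code (list_decode j) \<in> rat_solutions k" using solution_witness_iff[OF v] w by (simp add: rat_solutions_eq)
  then show "k \<in> has_rat_solution_set" using v by (auto simp: has_rat_solution_set_def)
qed

lemma re_set_has_rat_solution_set: "re_set has_rat_solution_set"
  by (rule re_set_if_ex_decidable[where P="\<lambda>v. solution_witness (v!0) (v!1)"])
     (auto intro!: computable_intros simp: has_rat_solution_set_iff_witness)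

section \<open>Reductions between the two problems\<close>

definition dummy_var_code :: "nat \<Rightarrow> nat" where "dummy_var_code k = prod_encode (Suc (fst (prod_decode k)), ipoly_shift_code (snd (prod_decode k)))"

lemma computable_dummy_var_code[computable_intros]:
  "computable m K \<Longrightarrow> computable m (\<lambda>v. dummy_var_code (K v))" unfolding dummy_var_code_def by (intro computable_intros)

lemma decode_poly_dummy_var_code:
  "decode_poly (dummy_var_code k) = (Suc (fst (prod_decode k)), ipoly_shift (ipoly_decode (snd (prod_decode k))))"
proof -
  have "ipoly_shift_code (snd (prod_decode k)) = ipoly_encode (ipoly_shift (ipoly_decode (snd (prod_decode k))))"
    by (simp add: ipoly_encode_shift)
  then show ?thesis by (simp add: dummy_var_code_def decode_poly_eq)
qed

lemma valid_code_dummy_var_code: "valid_code k \<Longrightarrow> valid_code (dummy_var_code k)"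
  using ipoly_wf_shift[OF valid_code_ipoly_wf]
  by (simp add: valid_code_iff_decode_poly decode_poly_dummy_var_code)

lemma rat_solutions_dummy_var_code:
  "rat_solutions (dummy_var_code k) = (\<lambda>(y, xs). y # xs) ` (UNIV \<times> rat_solutions k)"
proof -
  have "rat_solutions (dummy_var_code k) = {xs. length xs = Suc (fst (prod_decode k)) \<and>
      ipoly_eval (ipoly_shift (ipoly_decode (snd (prod_decode k)))) xs = 0}"
    by (simp add: rat_solutions_def decode_poly_dummy_var_code)
  then show ?thesis
    by (fastforce simp: ipoly_eval_shift rat_solutions_eq length_Suc_conv)
qed

lemma dummy_var_code_fin_iff:
  assumes "valid_code k"
  shows "dummy_var_code k \<in> fin_rat_solutions_set \<longleftrightarrow> rat_solutions k = {}"
proof -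
  have "inj (\<lambda>(y::rat, xs). y # xs)" by (auto simp: inj_def)
  then have "finite (rat_solutions (dummy_var_code k))
    \<longleftrightarrow> finite ((UNIV :: rat set) \<times> rat_solutions k)"
    unfolding rat_solutions_dummy_var_code by (simp add: finite_image_iff inj_on_subset)
  also have "\<dots> \<longleftrightarrow> rat_solutions k = {}"
    using infinite_UNIV_char_0 by (auto simp: finite_cartesian_product_iff)
  finally show ?thesis
    using assms valid_code_dummy_var_code by (simp add: fin_rat_solutions_set_def)
qed

definition avoiding_code :: "nat \<Rightarrow> nat \<Rightarrow> nat" where
  "avoiding_code k j = prod_encode (Suc (fst (prod_decode k)), ipoly_avoiding_code (fst (prod_decode k)) (snd (prod_decode k)) j)"

lemma computable_avoiding_code[computable_intros]:
  "computable m K \<Longrightarrow> computable m J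
    \<Longrightarrow> computable m (\<lambda>v. avoiding_code (K v) (J v))" unfolding avoiding_code_def by (intro computable_intros)

lemma decode_poly_avoiding_code:
  "decode_poly (avoiding_code k j) = (Suc (fst (prod_decode k)), ipoly_avoiding (fst (prod_decode k)) (ipoly_decode (snd (prod_decode k))) (list_decode j))"
proof -
  have "ipoly_avoiding_code (fst (prod_decode k)) (snd (prod_decode k)) j = ipoly_encode (ipoly_avoiding (fst (prod_decode k)) (ipoly_decode (snd (prod_decode k))) (list_decode j))"
    by (simp add: ipoly_encode_avoiding)
  then show ?thesis by (simp add: avoiding_code_def decode_poly_eq)
qed

lemma avoiding_code_no_solution_iff:
  "valid_code k \<Longrightarrow> avoiding_code k j \<notin> has_rat_solution_set \<longleftrightarrow>
  (\<forall>xs\<in>rat_solutions k. \<exists>t\<in>set (list_decode j). xs = point_of_code (fst (prod_decode k)) t)"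
proof -
  assume v: "valid_code k"
  let ?n = "fst (prod_decode k)" and ?D = "ipoly_decode (snd (prod_decode k))"
  have w: "ipoly_wf ?n ?D" using valid_code_ipoly_wf[OF v] .
  have vg: "valid_code (avoiding_code k j)"
    using ipoly_wf_avoiding[of ?n ?D "list_decode j"] by (simp add: valid_code_iff_decode_poly decode_poly_avoiding_code)
  have "avoiding_code k j \<in> has_rat_solution_set
    \<longleftrightarrow> (\<exists>z. length z = Suc ?n \<and> ipoly_eval (ipoly_avoiding ?n ?D (list_decode j)) z = 0)"
    using vg by (auto simp: has_rat_solution_set_def rat_solutions_def decode_poly_avoiding_code)
  also have "\<dots> \<longleftrightarrow> (\<exists>xs. length xs = ?n \<and> ipoly_eval ?D xs = 0 \<and> (\<forall>t\<in>set (list_decode j). xs \<noteq> point_of_code ?n t))"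
    by (rule ipoly_avoiding_root_iff[OF w])
  finally show ?thesis by (auto simp: rat_solutions_eq)
qed

lemma point_of_code_surj:
  assumes "length xs = n"
  shows "\<exists>t. point_of_code n t = xs"
proof -
  obtain zs where "map rat_of_code zs = xs" using rat_list_of_codes_surj by blast
  then have "point_of_code n (list_encode zs) = xs"
    using assms by (auto simp: point_of_code_def nth_code_list_encode list_eq_iff_nth_eq)
  then show ?thesis by blast
qed

lemma fin_rat_solutions_set_iff_avoiding:
  "k \<in> fin_rat_solutions_set
    \<longleftrightarrow> valid_code k \<and> (\<exists>j. avoiding_code k j \<notin> has_rat_solution_set)"
proof
  assume "k \<in> fin_rat_solutions_set"
  then have v: "valid_code k" and f: "finite (rat_solutions k)" by (auto simp: fin_rat_solutions_set_def)
  let ?n = "fst (prod_decode k)"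
  obtain L where L: "set L = rat_solutions k" using finite_list[OF f] by blast
  have "\<forall>xs\<in>set L. \<exists>t. point_of_code ?n t = xs"
    using L by (auto simp: rat_solutions_eq intro: point_of_code_surj)
  then obtain tf where tf: "\<forall>xs\<in>set L. point_of_code ?n (tf xs) = xs" by metis
  let ?j = "list_encode (map tf L)"
  have "\<forall>xs\<in>rat_solutions k. \<exists>t\<in>set (list_decode ?j). xs = point_of_code ?n t"
    using tf L by force
  then have "avoiding_code k ?j \<notin> has_rat_solution_set" using avoiding_code_no_solution_iff[OF v] by blast
  then show "valid_code k \<and> (\<exists>j. avoiding_code k j \<notin> has_rat_solution_set)" using v by blast
next
  assume "valid_code k \<and> (\<exists>j. avoiding_code k j \<notin> has_rat_solution_set)"
  then obtain j where v: "valid_code k" and g: "avoiding_code k j \<notin> has_rat_solution_set" by blast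
  have "rat_solutions k \<subseteq> point_of_code (fst (prod_decode k)) ` set (list_decode j)"
    using avoiding_code_no_solution_iff[OF v] g by blast
  then have "finite (rat_solutions k)" by (rule finite_subset) simp
  then show "k \<in> fin_rat_solutions_set" using v by (simp add: fin_rat_solutions_set_def)
qed

lemma re_set_no_rat_solution_if_re_set_fin:
  assumes "re_set fin_rat_solutions_set"
  shows "re_set (- has_rat_solution_set)"
proof -
  have "- has_rat_solution_set = {k. \<not> valid_code k} \<union> dummy_var_code -` fin_rat_solutions_set"
    by (auto simp: has_rat_solution_set_def dummy_var_code_fin_iff)
  moreover have "re_set {k. \<not> valid_code k}"
    by (rule re_set_if_decidable) (auto intro!: computable_intros)
  moreover have "re_set (dummy_var_code -` fin_rat_solutions_set)"
    using assms by (rule re_set_vimage) (auto intro!: computable_intros)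
  ultimately show ?thesis by (simp add: re_set_Un)
qed

lemma re_set_fin_rat_solutions_if_recursive:
  assumes "recursive_set has_rat_solution_set"
  shows "re_set fin_rat_solutions_set"
proof -
  have S: "decidable 1 (\<lambda>v. v!0 \<in> has_rat_solution_set)"
    using assms by (simp add: recursive_set_iff_decidable)
  have "decidable 2 (\<lambda>v. valid_code (v!0) \<and> \<not> [avoiding_code (v!0) (v!1)]!0 \<in> has_rat_solution_set)"
    by (intro decidable_conj decidable_not decidable_comp1[OF S] computable_intros) auto
  then show ?thesis
    by (rule re_set_if_ex_decidable) (simp add: fin_rat_solutions_set_iff_avoiding)
qed

theorem mainTheorem13:
  shows "recursive_set has_rat_solution_set \<longleftrightarrow> re_set fin_rat_solutions_set"
proof
  assume "recursive_set has_rat_solution_set"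
  then show "re_set fin_rat_solutions_set" by (rule re_set_fin_rat_solutions_if_recursive)
next
  assume "re_set fin_rat_solutions_set"
  then have "re_set (- has_rat_solution_set)" by (rule re_set_no_rat_solution_if_re_set_fin)
  with re_set_has_rat_solution_set show "recursive_set has_rat_solution_set"
    by (rule recursive_set_if_re_set_complement)
qed

end
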